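(* Let $\alpha_1,\alpha_2\in\mathbb{R}\setminus\{0\}$, $r=\alpha_2/\alpha_1$. For every $b\in\mathbb{R}$, there is no constant $C$ such that $$\|\partial_x(w_1w_2)\|_{X^{\alpha_1}_{s,b-1}}\le C\|w_1\|_{X^{\alpha_1}_{s,b}}\|w_2\|_{X^{\alpha_2}_{s,b}}$$ holds for all $w_1\in X^{\alpha_1}_{s,b}$, $w_2\in X^{\alpha_2}_{s,b}$ with $\hat w_2(0,\cdot)=0$, in each of the situations: (a) $r<\frac14$ and $s<-\frac12$; (b) $r=1$ and $s<-\frac12$, even when additionally $\hat w_1(0,\cdot)=0$ is imposed; (c) $r=1$ and any $s\in\mathbb{R}$ (without the restriction $\hat w_1(0,\cdot)=0$); (d) $r\in[\frac14,\infty)\setminus\{1\}$ and $s<s_r$. Moreover, (e) for any $r\ne0$ and any $s\in\mathbb{R}$, there is no such $C$ if the restriction $\hat w_2(0,\cdot)=0$ is dropped.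
   Context: On $\mathbb{T}=\mathbb{R}/(2\pi\mathbb{Z})$: $\hat w(k,\tau)=\int_\mathbb{R}\int_0^{2\pi}e^{-i(\tau t+kx)}w(x,t)\,dx\,dt$, $k\in\mathbb{Z}$; $\langle\cdot\rangle=1+|\cdot|$; $X^{\alpha}_{s,b}$ is the completion of Schwartz functions under $\|w\|=\|\langle k\rangle^s\langle\tau-\alpha k^3\rangle^b\hat w(k,\tau)\|_{L^2(\mathbb{Z}\times\mathbb{R})}$. Irrationality exponent $\mu(\rho)=\sup\{\mu:0<|\rho-m/n|<|n|^{-\mu}$ for infinitely many $(m,n)\in\mathbb{Z}\times(\mathbb{Z}\setminus\{0\})\}$; for $r\ge\frac14$, $\sigma_r=\mu(\sqrt{12r-3})$, $s_r=1$ if $\sigma_r=1$ or $\sigma_r\ge3$, $s_r=(\sigma_r-1)/2$ if $2\le\sigma_r<3$. *)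

theory Defs
  imports "HOL-Analysis.Analysis"
begin

text \<open>Functions on T x R are represented as w :: real => real => complex, w x t,
  2 pi-periodic in x.\<close>

definition pdx :: "(real \<Rightarrow> real \<Rightarrow> complex) \<Rightarrow> real \<Rightarrow> real \<Rightarrow> complex" where
  "pdx f = (\<lambda>x t. vector_derivative (\<lambda>y. f y t) (at x))"

definition pdt :: "(real \<Rightarrow> real \<Rightarrow> complex) \<Rightarrow> real \<Rightarrow> real \<Rightarrow> complex" where
  "pdt f = (\<lambda>x t. vector_derivative (\<lambda>s. f x s) (at t))"

text \<open>Iterated partial derivative: True = d/dx, False = d/dt (innermost last in list).\<close>
fun pd :: "bool list \<Rightarrow> (real \<Rightarrow> real \<Rightarrow> complex) \<Rightarrow> real \<Rightarrow> real \<Rightarrow> complex" where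
  "pd [] f = f"
| "pd (True # ds) f = pdx (pd ds f)"
| "pd (False # ds) f = pdt (pd ds f)"

definition smooth2 :: "(real \<Rightarrow> real \<Rightarrow> complex) \<Rightarrow> bool" where
  "smooth2 f \<longleftrightarrow>
     (\<forall>ds x t. (\<lambda>y. pd ds f y t) differentiable (at x) \<and> (\<lambda>s. pd ds f x s) differentiable (at t)) \<and>
     (\<forall>ds. continuous_on UNIV (\<lambda>(x, t). pd ds f x t))"

definition schwartz_TR :: "(real \<Rightarrow> real \<Rightarrow> complex) \<Rightarrow> bool" where
  "schwartz_TR f \<longleftrightarrow> smooth2 f \<and> (\<forall>x t. f (x + 2 * pi) t = f x t) \<and>
     (\<forall>ds (n::nat). \<exists>M. \<forall>x t. \<bar>t\<bar> ^ n * cmod (pd ds f x t) \<le> M)"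

definition fourier_TR :: "(real \<Rightarrow> real \<Rightarrow> complex) \<Rightarrow> int \<Rightarrow> real \<Rightarrow> complex" where
  "fourier_TR w k \<tau> =
     (LINT t|lborel. (LINT x:{0..2*pi}|lborel. cis (- (\<tau> * t + of_int k * x)) * w x t))"

definition Xnorm :: "real \<Rightarrow> real \<Rightarrow> real \<Rightarrow> (real \<Rightarrow> real \<Rightarrow> complex) \<Rightarrow> real" where
  "Xnorm \<alpha> s b w = sqrt (enn2real
     (\<integral>\<^sup>+ k. (\<integral>\<^sup>+ \<tau>. ennreal ((1 + \<bar>real_of_int k\<bar>) powr (2 * s)
          * (1 + \<bar>\<tau> - \<alpha> * (real_of_int k) ^ 3\<bar>) powr (2 * b)
          * (cmod (fourier_TR w k \<tau>))\<^sup>2) \<partial>lborel) \<partial>(count_space (UNIV :: int set))))"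

definition dx_prod :: "(real \<Rightarrow> real \<Rightarrow> complex) \<Rightarrow> (real \<Rightarrow> real \<Rightarrow> complex) \<Rightarrow> real \<Rightarrow> real \<Rightarrow> complex" where
  "dx_prod w1 w2 = pdx (\<lambda>x t. w1 x t * w2 x t)"

definition zero_mode :: "(real \<Rightarrow> real \<Rightarrow> complex) \<Rightarrow> bool" where
  "zero_mode w \<longleftrightarrow> (\<forall>\<tau>. fourier_TR w 0 \<tau> = 0)"

definition bilin_est :: "real \<Rightarrow> real \<Rightarrow> real \<Rightarrow> real \<Rightarrow> real \<Rightarrow> (real \<Rightarrow> real \<Rightarrow> complex) \<Rightarrow> (real \<Rightarrow> real \<Rightarrow> complex) \<Rightarrow> bool" where
  "bilin_est \<alpha>1 \<alpha>2 s b C w1 w2 \<longleftrightarrow>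
     Xnorm \<alpha>1 s (b - 1) (dx_prod w1 w2) \<le> C * Xnorm \<alpha>1 s b w1 * Xnorm \<alpha>2 s b w2"

definition irr_exp :: "real \<Rightarrow> ereal" where
  "irr_exp \<rho> = Sup {ereal \<mu> | \<mu>. infinite {(m :: int, n :: int). n \<noteq> 0 \<and>
      0 < \<bar>\<rho> - real_of_int m / real_of_int n\<bar> \<and>
      \<bar>\<rho> - real_of_int m / real_of_int n\<bar> < \<bar>real_of_int n\<bar> powr (- \<mu>)}}"

definition sigma_r :: "real \<Rightarrow> ereal" where
  "sigma_r r = irr_exp (sqrt (12 * r - 3))"

text \<open>s_r (for r >= 1/4 one has sigma_r = 1 or sigma_r >= 2, so the cases are exhaustive).\<close>
definition s_r :: "real \<Rightarrow> real" where
  "s_r r = (if 2 \<le> sigma_r r \<and> sigma_r r < 3 then (real_of_ereal (sigma_r r) - 1) / 2 else 1)"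

end

theory Submission
  imports Defs "HOL-Probability.Characteristic_Functions" "HOL-Computational_Algebra.Polynomial"
begin

text \<open>Testing the estimate on Gaussian wave packets \<open>e\<^bsup>i(kx + ct)\<^esup> e\<^bsup>-t\<^sup>2\<^esup>\<close>, whose space-time
  Fourier transforms are concentrated at \<open>(k, c)\<close>, shows that \<open>C\<^sup>2\<close> must dominate the resonance ratio
  \<open>|k1 + k2|\<^sup>2 \<langle>k1 + k2\<rangle>\<^bsup>2s\<^esup> / (\<langle>k1\<rangle>\<^bsup>2s\<^esup> \<langle>k2\<rangle>\<^bsup>2s\<^esup> \<langle>H\<rangle>)\<close> with
  \<open>H = \<alpha>1 k1\<^sup>3 + \<alpha>2 k2\<^sup>3 - \<alpha>1 (k1 + k2)\<^sup>3\<close>, over all frequencies allowed by the mean-zero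
  conditions: putting either both inputs or the output on its curve \<open>\<tau> = \<alpha> k\<^sup>3\<close>, the modulation
  weights cost at most one factor \<open>\<langle>H\<rangle>\<close>, whatever \<open>b\<close> is. Each case then exhibits frequencies along
  which this ratio is unbounded: \<open>(k, 0)\<close> for (e) and \<open>(0, k)\<close> with \<open>\<alpha>1 = \<alpha>2\<close> for (c), where
  \<open>H = 0\<close>; \<open>(N, N)\<close> for (a) and \<open>(N + 1, -N)\<close> for (b) when \<open>s < -1/2\<close>; and \<open>(m - 3n, 6n)\<close>
  for (d), where \<open>H = 18 \<alpha>1 n ((12r - 3) n\<^sup>2 - m\<^sup>2)\<close> is small whenever \<open>m / n\<close> is a good rational
  approximation of \<open>\<surd>(12r - 3)\<close>, the quality of which is measured by \<open>\<sigma>\<^sub>r\<close>.\<close>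

section \<open>Gaussian integrals\<close>

lemma integral_cis_std_gaussian:
  "(LINT x|lborel. cis (w * x) * complex_of_real (exp (- (x^2) / 2))) =
     complex_of_real (sqrt (2*pi) * exp (- (w^2) / 2))"
proof -
  have "char std_normal_distribution w = complex_of_real (exp (- (w^2) / 2))"
    by (simp add: char_std_normal_distribution)
  moreover have "char std_normal_distribution w = (LINT x|lborel. std_normal_density x *\<^sub>R iexp (w * x))"
    unfolding char_def by (subst integral_density) auto
  moreover have "\<And>x. std_normal_density x *\<^sub>R iexp (w * x) =
      complex_of_real (1 / sqrt (2*pi)) * (cis (w * x) * complex_of_real (exp (- (x^2) / 2)))"
    by (simp add: std_normal_density_def cis_conv_exp scaleR_conv_of_real mult.commute mult.left_commute)
  ultimately have "complex_of_real (1 / sqrt (2*pi)) *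
      (LINT x|lborel. cis (w * x) * complex_of_real (exp (- (x^2) / 2))) = complex_of_real (exp (- (w^2) / 2))"
    by simp
  then show ?thesis
    by (simp add: field_simps)
qed

lemma integral_cis_gaussian:
  assumes "0 < a"
  shows "(LINT t|lborel. cis (w * t) * complex_of_real (exp (- a * t^2))) =
           complex_of_real (sqrt (pi / a) * exp (- (w^2) / (4*a)))"
proof -
  define c where "c = 1 / sqrt (2 * a)"
  have c: "c > 0" "c^2 = 1 / (2*a)"
    using assms by (simp_all add: c_def power_divide)
  have "(LINT t|lborel. cis (w * t) * complex_of_real (exp (- a * t^2))) =
        \<bar>c\<bar> *\<^sub>R (LINT x|lborel. cis (w * (0 + c * x)) * complex_of_real (exp (- a * (0 + c * x)^2)))"
    by (rule lborel_integral_real_affine) (use c in auto)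
  also have "(\<lambda>x. cis (w * (0 + c * x)) * complex_of_real (exp (- a * (0 + c * x)^2))) =
      (\<lambda>x. cis ((w*c) * x) * complex_of_real (exp (- (x^2) / 2)))"
  proof
    fix x
    have "- a * (0 + c * x)^2 = - (x^2)/2"
      using assms c by (simp add: power_mult_distrib field_simps)
    then show "cis (w * (0 + c * x)) * complex_of_real (exp (- a * (0 + c * x)^2)) =
        cis ((w*c) * x) * complex_of_real (exp (- (x^2) / 2))"
      by (simp add: mult.assoc)
  qed
  also have "\<bar>c\<bar> *\<^sub>R (LINT x|lborel. cis ((w*c) * x) * complex_of_real (exp (- (x^2) / 2))) =
      complex_of_real (c * sqrt (2*pi) * exp (- ((w*c)^2) / 2))"
    using c integral_cis_std_gaussian[of "w*c"] by (simp add: scaleR_conv_of_real)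
  also have "c * sqrt (2*pi) = sqrt (pi / a)"
    using assms by (simp add: c_def real_sqrt_divide real_sqrt_mult field_simps)
  also have "- ((w*c)^2) / 2 = - (w^2) / (4*a)"
    using assms c by (simp add: power_mult_distrib field_simps)
  finally show ?thesis .
qed

lemma nn_integral_shifted_gaussian:
  assumes "0 < q"
  shows "(\<integral>\<^sup>+\<tau>. ennreal (exp (- ((\<tau> - c)^2) / q)) \<partial>lborel) = ennreal (sqrt (pi * q))"
proof -
  define \<sigma> where "\<sigma> = sqrt (q / 2)"
  have \<sigma>: "0 < \<sigma>" "2 * \<sigma>^2 = q"
    using assms by (simp_all add: \<sigma>_def)
  have "(\<integral>\<^sup>+\<tau>. ennreal (normal_density c \<sigma> \<tau>) \<partial>lborel) = 1"
    by (subst nn_integral_eq_integral)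
      (auto simp: integrable_normal_density[OF \<sigma>(1)] integral_normal_density[OF \<sigma>(1)])
  moreover have "\<And>\<tau>. exp (- ((\<tau> - c)^2) / q) = sqrt (2 * pi * \<sigma>^2) * normal_density c \<sigma> \<tau>"
    using \<sigma> by (simp add: normal_density_def)
  ultimately have "(\<integral>\<^sup>+\<tau>. ennreal (exp (- ((\<tau> - c)^2) / q)) \<partial>lborel) = ennreal (sqrt (2 * pi * \<sigma>^2))"
    by (simp add: ennreal_mult nn_integral_cmult)
  also have "sqrt (2 * pi * \<sigma>^2) = sqrt (pi * q)"
    using \<sigma> by (simp add: mult.commute mult.left_commute)
  finally show ?thesis .
qed

lemma has_vector_derivative_cis_affine:
  "((\<lambda>x. cis (u * x + v)) has_vector_derivative (\<i> * complex_of_real u * cis (u*x+v))) (at x within S)"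
proof -
  have "((\<lambda>x. u * x + v) has_derivative (\<lambda>t. u * t)) (at x within S)"
    by (auto intro!: derivative_eq_intros)
  from has_derivative_cis[OF this] show ?thesis
    unfolding has_vector_derivative_def
    by (rule has_derivative_eq_rhs) (auto simp: scaleR_conv_of_real fun_eq_iff)
qed

lemma set_integral_cis_int_period:
  "(LINT x:{0..2*pi}|lborel. cis (of_int j * x)) = (if j = 0 then complex_of_real (2*pi) else 0)"
proof (cases "j = 0")
  case True
  then show ?thesis by (simp add: set_integral_const scaleR_conv_of_real)
next
  case False
  define F where "F = (\<lambda>x. (- \<i> / of_int j) * cis (of_int j * x + 0))"
  have "(LINT x:{0..2*pi}|lborel. cis (of_int j * x)) = (LBINT x=ereal 0..ereal (2*pi). cis (of_int j * x))"
    by (rule sym, rule interval_integral_Icc) simp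
  also have "\<dots> = F (2*pi) - F 0"
  proof (rule interval_integral_FTC_finite)
    show "continuous_on {min 0 (2 * pi)..max 0 (2 * pi)} (\<lambda>x. cis (of_int j * x))"
      by (intro continuous_intros)
    fix x :: real
    have "(F has_vector_derivative ((- \<i> / of_int j) * (\<i> * complex_of_real (of_int j) * cis (of_int j * x + 0))))
        (at x within {min 0 (2 * pi)..max 0 (2 * pi)})"
      unfolding F_def by (intro has_vector_derivative_mult_right has_vector_derivative_cis_affine)
    then show "(F has_vector_derivative cis (of_int j * x)) (at x within {min 0 (2 * pi)..max 0 (2 * pi)})"
      using False by (simp add: field_simps)
  qed
  also have "\<dots> = 0"
    using cis_multiple_2pi[of "of_int j"] by (simp add: F_def mult.commute)
  finally show ?thesis using False by simp
qed

section \<open>Gaussian wave packets\<close>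

definition wave_poly :: "int \<Rightarrow> real \<Rightarrow> real \<Rightarrow> complex poly \<Rightarrow> real \<Rightarrow> real \<Rightarrow> complex" where
  "wave_poly k c a P = (\<lambda>x t. cis (of_int k * x + c * t) * poly P (complex_of_real t) * complex_of_real (exp (- a * t^2)))"

definition wave :: "complex \<Rightarrow> int \<Rightarrow> real \<Rightarrow> real \<Rightarrow> real \<Rightarrow> real \<Rightarrow> complex" where
  "wave A k c a = (\<lambda>x t. A * cis (of_int k * x + c * t) * complex_of_real (exp (- a * t^2)))"

lemma wave_eq_wave_poly: "wave A k c a = wave_poly k c a [:A:]"
  unfolding wave_def wave_poly_def by (simp add: fun_eq_iff mult_ac)

definition pderiv_wave :: "real \<Rightarrow> real \<Rightarrow> complex poly \<Rightarrow> complex poly" where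
  "pderiv_wave c a P = smult (\<i> * complex_of_real c) P + pderiv P - smult (complex_of_real (2 * a)) (pCons 0 P)"

lemma has_vector_derivative_wave_poly_x:
  "((\<lambda>y. wave_poly k c a P y t) has_vector_derivative wave_poly k c a (smult (\<i> * of_int k) P) x t) (at x)"
proof -
  have "((\<lambda>y. cis (of_int k * y + c * t) * (poly P (complex_of_real t) * complex_of_real (exp (- a * t^2))))
     has_vector_derivative (\<i> * complex_of_real (of_int k) * cis (of_int k * x + c * t)) *
       (poly P (complex_of_real t) * complex_of_real (exp (- a * t^2)))) (at x)"
    by (intro has_vector_derivative_mult_left has_vector_derivative_cis_affine)
  then show ?thesis unfolding wave_poly_def by (simp add: mult_ac)
qed

lemma has_vector_derivative_wave_poly_t:
  "((\<lambda>s. wave_poly k c a P x s) has_vector_derivative wave_poly k c a (pderiv_wave c a P) x t) (at t)"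
proof -
  have "(complex_of_real has_vector_derivative 1) (at t)"
    using has_vector_derivative_of_real[of "\<lambda>x. x" 1 "at t"] by simp
  then have "((poly P \<circ> complex_of_real) has_vector_derivative (1 * poly (pderiv P) (complex_of_real t))) (at t)"
    by (rule field_vector_diff_chain_at) simp
  then have poly: "((\<lambda>s. poly P (complex_of_real s)) has_vector_derivative poly (pderiv P) (complex_of_real t)) (at t)"
    by (simp add: o_def)
  have gauss: "((\<lambda>s. complex_of_real (exp (- a * s^2))) has_vector_derivative
      complex_of_real (exp (- a * t^2) * (- 2 * a * t))) (at t)"
    by (rule has_vector_derivative_of_real) (auto intro!: derivative_eq_intros)
  have "((\<lambda>s. cis (c * s + of_int k * x) * poly P (complex_of_real s) * complex_of_real (exp (- a * s^2))) has_vector_derivative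
     (cis (c * t + of_int k * x) * poly P (complex_of_real t) * complex_of_real (exp (- a * t^2) * (- 2 * a * t))
      + (cis (c * t + of_int k * x) * poly (pderiv P) (complex_of_real t)
         + (\<i> * complex_of_real c * cis (c * t + of_int k * x)) * poly P (complex_of_real t))
        * complex_of_real (exp (- a * t^2)))) (at t)"
    by (intro has_vector_derivative_mult has_vector_derivative_cis_affine poly gauss)
  then show ?thesis
    unfolding wave_poly_def pderiv_wave_def by (simp add: algebra_simps add.commute)
qed

lemma pdx_wave_poly: "pdx (wave_poly k c a P) = wave_poly k c a (smult (\<i> * of_int k) P)"
  unfolding pdx_def by (intro ext vector_derivative_at has_vector_derivative_wave_poly_x)

lemma pdt_wave_poly: "pdt (wave_poly k c a P) = wave_poly k c a (pderiv_wave c a P)"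
  unfolding pdt_def by (intro ext vector_derivative_at has_vector_derivative_wave_poly_t)

lemma pd_wave_poly: "\<exists>Q. pd ds (wave_poly k c a P) = wave_poly k c a Q"
proof (induction ds)
  case (Cons d ds)
  then obtain Q where "pd ds (wave_poly k c a P) = wave_poly k c a Q" by blast
  then show ?case by (cases d) (auto simp: pdx_wave_poly pdt_wave_poly)
qed auto

lemma norm_poly_le_bracket_power:
  "\<exists>C N. \<forall>t::real. cmod (poly P (complex_of_real t)) \<le> C * (1 + \<bar>t\<bar>)^N"
proof (induction P)
  case 0
  show ?case by (rule exI[of _ 0]) simp
next
  case (pCons a p)
  then obtain C N where CN: "\<And>t::real. cmod (poly p (complex_of_real t)) \<le> C * (1 + \<bar>t\<bar>)^N" by blast
  show ?case
  proof (intro exI allI)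
    fix t :: real
    have "cmod (poly (pCons a p) (complex_of_real t)) \<le> cmod a + \<bar>t\<bar> * cmod (poly p (complex_of_real t))"
      by (simp add: norm_mult norm_triangle_le)
    also have "\<dots> \<le> cmod a * (1 + \<bar>t\<bar>)^(Suc N) + (1 + \<bar>t\<bar>) * (C * (1 + \<bar>t\<bar>)^N)"
    proof (rule add_mono)
      have "1 \<le> (1 + \<bar>t\<bar>)^(Suc N)" by (rule one_le_power) simp
      then show "cmod a \<le> cmod a * (1 + \<bar>t\<bar>)^(Suc N)"
        by (simp add: mult_le_cancel_left1)
      show "\<bar>t\<bar> * cmod (poly p (complex_of_real t)) \<le> (1 + \<bar>t\<bar>) * (C * (1 + \<bar>t\<bar>)^N)"
        by (rule mult_mono) (use CN[of t] in auto)
    qed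
    also have "\<dots> = (cmod a + C) * (1 + \<bar>t\<bar>)^(Suc N)" by (simp add: algebra_simps)
    finally show "cmod (poly (pCons a p) (complex_of_real t)) \<le> (cmod a + C) * (1 + \<bar>t\<bar>)^(Suc N)" .
  qed
qed

lemma bracket_powr_mult_gaussian_le:
  fixes a p t :: real
  assumes "0 < a" and "0 \<le> p"
  shows "(1 + \<bar>t\<bar>) powr p * exp (- a * t^2) \<le> exp (p ^ 2 / (4 * a))"
proof -
  have "(1 + \<bar>t\<bar>) powr p = exp (p * ln (1 + \<bar>t\<bar>))"
    by (simp add: powr_def add_nonneg_eq_0_iff)
  also have "\<dots> \<le> exp (p * \<bar>t\<bar>)"
    using assms by (simp add: mult_left_mono ln_add_one_self_le_self)
  finally have "(1 + \<bar>t\<bar>) powr p * exp (- a * t^2) \<le> exp (p * \<bar>t\<bar> - a * t^2)"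
    by (simp add: exp_diff divide_inverse exp_minus)
  also have "\<dots> \<le> exp (p ^ 2 / (4 * a))"
  proof -
    have "0 \<le> (p - 2 * a * \<bar>t\<bar>)^2" by simp
    then have "4 * a * (p * \<bar>t\<bar> - a * t^2) \<le> p ^ 2"
      by (simp add: power2_eq_square algebra_simps)
    then show ?thesis
      using assms by (simp add: field_simps mult.commute)
  qed
  finally show ?thesis .
qed

lemma wave_poly_rapid_decay:
  assumes "0 < a"
  shows "\<exists>M. \<forall>x t. \<bar>t\<bar> ^ n * cmod (wave_poly k c a P x t) \<le> M"
proof -
  obtain C N where CN: "\<And>t::real. cmod (poly P (complex_of_real t)) \<le> C * (1 + \<bar>t\<bar>)^N"
    using norm_poly_le_bracket_power by blast
  have C: "C \<ge> 0" using CN[of 0] by (simp del: of_real_0) (meson norm_ge_zero order_trans)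
  show ?thesis
  proof (intro exI allI)
    fix x t :: real
    have "\<bar>t\<bar> ^ n * cmod (wave_poly k c a P x t) = \<bar>t\<bar> ^ n * (cmod (poly P (complex_of_real t)) * exp (- a * t^2))"
      by (simp add: wave_poly_def norm_mult)
    also have "\<dots> \<le> (1 + \<bar>t\<bar>) ^ n * ((C * (1 + \<bar>t\<bar>)^N) * exp (- a * t^2))"
      by (intro mult_mono power_mono) (use CN[of t] C in auto)
    also have "\<dots> = C * ((1 + \<bar>t\<bar>) ^ (n + N) * exp (- a * t^2))"
      by (simp add: power_add algebra_simps)
    also have "\<dots> \<le> C * exp (real (n + N) ^ 2 / (4 * a))"
      using bracket_powr_mult_gaussian_le[OF assms, of "real (n + N)" t] C
      unfolding powr_realpow[of "1 + \<bar>t\<bar>", OF add_pos_nonneg[OF zero_less_one abs_ge_zero]]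
      by (intro mult_left_mono) simp_all
    finally show "\<bar>t\<bar> ^ n * cmod (wave_poly k c a P x t) \<le> C * exp (real (n + N) ^ 2 / (4 * a))" .
  qed
qed

lemma schwartz_wave_poly:
  assumes "0 < a"
  shows "schwartz_TR (wave_poly k c a P)"
  unfolding schwartz_TR_def smooth2_def
proof (intro conjI allI)
  fix ds x t
  obtain Q where Q: "pd ds (wave_poly k c a P) = wave_poly k c a Q" using pd_wave_poly by blast
  show "(\<lambda>y. pd ds (wave_poly k c a P) y t) differentiable at x"
    "(\<lambda>s. pd ds (wave_poly k c a P) x s) differentiable at t"
    unfolding Q by (rule differentiableI_vector has_vector_derivative_wave_poly_x
        has_vector_derivative_wave_poly_t)+
  fix n :: nat
  show "\<exists>M. \<forall>x t. \<bar>t\<bar> ^ n * cmod (pd ds (wave_poly k c a P) x t) \<le> M"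
    unfolding Q by (rule wave_poly_rapid_decay[OF assms])
next
  fix ds
  obtain Q where Q: "pd ds (wave_poly k c a P) = wave_poly k c a Q" using pd_wave_poly by blast
  show "continuous_on UNIV (\<lambda>(x, t). pd ds (wave_poly k c a P) x t)"
    unfolding Q unfolding wave_poly_def split_def by (intro continuous_intros)
next
  fix x t
  have "cis (of_int k * (x + 2 * pi) + c * t) = cis (of_int k * x + c * t) * cis (2 * pi * of_int k)"
    by (simp add: cis_mult algebra_simps)
  then show "wave_poly k c a P (x + 2 * pi) t = wave_poly k c a P x t"
    using cis_multiple_2pi[of "of_int k"] by (simp add: wave_poly_def)
qed

lemma schwartz_wave: "0 < a \<Longrightarrow> schwartz_TR (wave A k c a)"
  by (simp add: wave_eq_wave_poly schwartz_wave_poly)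

lemma pdx_wave: "pdx (wave A k c a) = wave (\<i> * of_int k * A) k c a"
  unfolding wave_eq_wave_poly pdx_wave_poly by (simp add: mult.assoc)

lemma wave_mult_wave:
  "wave A1 k1 c1 a1 x t * wave A2 k2 c2 a2 x t = wave (A1 * A2) (k1 + k2) (c1 + c2) (a1 + a2) x t"
proof -
  have "cis (of_int k1 * x + c1 * t) * cis (of_int k2 * x + c2 * t) = cis (of_int (k1 + k2) * x + (c1 + c2) * t)"
    by (simp add: cis_mult algebra_simps)
  moreover have "exp (- a1 * t^2) * exp (- a2 * t^2) = exp (- (a1 + a2) * t^2)"
    by (simp add: exp_add[symmetric] algebra_simps)
  moreover have "wave A1 k1 c1 a1 x t * wave A2 k2 c2 a2 x t = (A1 * A2) *
      (cis (of_int k1 * x + c1 * t) * cis (of_int k2 * x + c2 * t)) *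
      complex_of_real (exp (- a1 * t^2) * exp (- a2 * t^2))"
    unfolding wave_def of_real_mult by (simp only: mult_ac)
  ultimately show ?thesis
    unfolding wave_def by simp
qed

lemma dx_prod_wave:
  "dx_prod (wave A1 k1 c1 a1) (wave A2 k2 c2 a2) =
     wave (\<i> * of_int (k1 + k2) * (A1 * A2)) (k1 + k2) (c1 + c2) (a1 + a2)"
  unfolding dx_prod_def wave_mult_wave pdx_wave ..

lemma fourier_wave:
  assumes "0 < a"
  shows "fourier_TR (wave A k c a) k' \<tau> =
    (if k' = k then A * complex_of_real (2 * pi * sqrt (pi / a) * exp (- ((c-\<tau>)^2) / (4*a))) else 0)"
proof -
  have inner: "(LINT x:{0..2*pi}|lborel. cis (- (\<tau> * t + of_int k' * x)) * wave A k c a x t)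
     = (A * cis ((c - \<tau>) * t) * complex_of_real (exp (- a * t^2))) * (if k - k' = 0 then complex_of_real (2*pi) else 0)"
    for t
  proof -
    have "cis (- (\<tau> * t + of_int k' * x)) * wave A k c a x t
        = (A * cis ((c - \<tau>) * t) * complex_of_real (exp (- a * t^2))) * cis (of_int (k - k') * x)" for x
    proof -
      have "cis (- (\<tau> * t + of_int k' * x)) * cis (of_int k * x + c * t) = cis ((c - \<tau>) * t) * cis (of_int (k - k') * x)"
        by (simp add: cis_mult algebra_simps)
      then show ?thesis
        unfolding wave_def by (simp only: mult.assoc[symmetric]) (simp add: mult.commute mult.left_commute)
    qed
    then have "(LINT x:{0..2*pi}|lborel. cis (- (\<tau> * t + of_int k' * x)) * wave A k c a x t)
       = (A * cis ((c - \<tau>) * t) * complex_of_real (exp (- a * t^2))) * (LINT x:{0..2*pi}|lborel. cis (of_int (k - k') * x))"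
      by (simp add: set_integral_mult_right)
    then show ?thesis by (simp only: set_integral_cis_int_period)
  qed
  show ?thesis
  proof (cases "k' = k")
    case True
    have "fourier_TR (wave A k c a) k' \<tau> =
        (LINT t|lborel. (2*pi*A) * (cis ((c - \<tau>) * t) * complex_of_real (exp (- a * t^2))))"
      unfolding fourier_TR_def inner using True by (simp add: mult_ac)
    also have "\<dots> = (2*pi*A) * complex_of_real (sqrt (pi / a) * exp (- ((c-\<tau>)^2) / (4*a)))"
      by (simp only: integral_mult_right_zero integral_cis_gaussian[OF assms])
    finally show ?thesis using True by simp
  next
    case False
    then show ?thesis unfolding fourier_TR_def inner by simp
  qed
qed

lemma zero_mode_wave: "0 < a \<Longrightarrow> k \<noteq> 0 \<Longrightarrow> zero_mode (wave A k c a)"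
  unfolding zero_mode_def by (simp add: fourier_wave)

section \<open>The weighted Gaussian integral in the modulation variable\<close>

lemma bracket_add_le_mult: "1 + \<bar>x + y\<bar> \<le> (1 + \<bar>x\<bar>) * (1 + \<bar>y\<bar>)" for x y :: real
proof -
  have "\<bar>x + y\<bar> \<le> \<bar>x\<bar> + \<bar>y\<bar>" by (rule abs_triangle_ineq)
  moreover have "(1 + \<bar>x\<bar>) * (1 + \<bar>y\<bar>) = 1 + \<bar>x\<bar> + \<bar>y\<bar> + \<bar>x\<bar> * \<bar>y\<bar>" by (simp add: algebra_simps)
  ultimately show ?thesis by (smt (verit) zero_le_mult_iff abs_ge_zero)
qed

lemma bracket_powr_add_le:
  "(1 + \<bar>x + y\<bar>) powr p \<le> (1 + \<bar>x\<bar>) powr p * (1 + \<bar>y\<bar>) powr \<bar>p\<bar>" for x y p :: real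
proof (cases "p \<ge> 0")
  case True
  have "(1 + \<bar>x + y\<bar>) powr p \<le> ((1 + \<bar>x\<bar>) * (1 + \<bar>y\<bar>)) powr p"
    by (rule powr_mono2) (use True bracket_add_le_mult in auto)
  then show ?thesis
    using True by (simp add: powr_mult)
next
  case False
  have "1 + \<bar>x\<bar> \<le> (1 + \<bar>x + y\<bar>) * (1 + \<bar>- y\<bar>)"
    using bracket_add_le_mult[of "x + y" "- y"] by simp
  then have "(1 + \<bar>x\<bar>) / (1 + \<bar>y\<bar>) \<le> 1 + \<bar>x + y\<bar>"
    by (simp add: divide_le_eq)
  with False have "(1 + \<bar>x + y\<bar>) powr p \<le> ((1 + \<bar>x\<bar>) / (1 + \<bar>y\<bar>)) powr p"
    by (intro powr_mono2') auto
  also have "\<dots> = (1 + \<bar>x\<bar>) powr p / (1 + \<bar>y\<bar>) powr p"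
    by (rule powr_divide)
  also have "\<dots> = (1 + \<bar>x\<bar>) powr p * (1 + \<bar>y\<bar>) powr (- p)"
    by (simp add: powr_minus divide_inverse)
  finally show ?thesis using False by simp
qed

lemma bracket_powr_add_ge:
  "(1 + \<bar>x\<bar>) powr p * (1 + \<bar>y\<bar>) powr (- \<bar>p\<bar>) \<le> (1 + \<bar>x + y\<bar>) powr p" for x y p :: real
proof -
  have "(1 + \<bar>x\<bar>) powr p \<le> (1 + \<bar>x + y\<bar>) powr p * (1 + \<bar>y\<bar>) powr \<bar>p\<bar>"
    using bracket_powr_add_le[of "x + y" "- y" p] by simp
  then show ?thesis
    by (simp add: powr_minus divide_inverse[symmetric] divide_le_eq)
qed

text \<open>The \<open>\<tau>\<close>-integral in the norm of a wave packet, whose squared Fourier transform is a Gaussian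
  centred at its temporal frequency \<open>c\<close>.\<close>

definition gauss_bracket_integral :: "real \<Rightarrow> real \<Rightarrow> real \<Rightarrow> real \<Rightarrow> real" where
  "gauss_bracket_integral q \<beta> e c =
     enn2real (\<integral>\<^sup>+\<tau>. ennreal ((1 + \<bar>\<tau> - e\<bar>) powr (2*\<beta>) * exp (- ((\<tau> - c)^2) / q)) \<partial>lborel)"

lemma nn_integral_gauss_bracket_le:
  assumes "0 < q"
  shows "(\<integral>\<^sup>+\<tau>. ennreal ((1 + \<bar>\<tau> - e\<bar>) powr (2*\<beta>) * exp (- ((\<tau> - c)^2) / q)) \<partial>lborel)
    \<le> ennreal (exp (2 * \<beta>^2 * q) * sqrt (pi * (2 * q)) * (1 + \<bar>c - e\<bar>) powr (2*\<beta>))"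
proof -
  define E where "E = exp (2 * \<beta>^2 * q)"
  have "(1 + \<bar>\<tau> - e\<bar>) powr (2*\<beta>) * exp (- ((\<tau> - c)^2) / q)
      \<le> ((1 + \<bar>c - e\<bar>) powr (2*\<beta>) * E) * exp (- ((\<tau> - c)^2) / (2 * q))" for \<tau>
  proof -
    \<comment> \<open>Half of the Gaussian absorbs the polynomial weight \<open>\<langle>\<tau> - c\<rangle>\<^bsup>|2\<beta>|\<^esup>\<close>.\<close>
    have split: "exp (- ((\<tau> - c)^2) / q) = exp (- (1 / (2*q)) * (\<tau> - c)^2) * exp (- ((\<tau> - c)^2) / (2 * q))"
      using assms by (simp add: exp_add[symmetric] field_simps)
    have "(1 + \<bar>\<tau> - c\<bar>) powr \<bar>2*\<beta>\<bar> * exp (- (1 / (2*q)) * (\<tau> - c)^2) \<le> exp (\<bar>2*\<beta>\<bar> ^ 2 / (4 * (1 / (2*q))))"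
      by (rule bracket_powr_mult_gaussian_le) (use assms in auto)
    also have "\<bar>2*\<beta>\<bar> ^ 2 / (4 * (1 / (2*q))) = 2 * \<beta>^2 * q"
      using assms by (simp add: power2_eq_square field_simps abs_mult_self_eq)
    finally have weight: "(1 + \<bar>\<tau> - c\<bar>) powr \<bar>2*\<beta>\<bar> * exp (- (1 / (2*q)) * (\<tau> - c)^2) \<le> E"
      unfolding E_def .
    have "(1 + \<bar>\<tau> - e\<bar>) powr (2*\<beta>) * exp (- ((\<tau> - c)^2) / q)
        \<le> ((1 + \<bar>c - e\<bar>) powr (2*\<beta>) * (1 + \<bar>\<tau> - c\<bar>) powr \<bar>2*\<beta>\<bar>) * exp (- ((\<tau> - c)^2) / q)"
      using bracket_powr_add_le[of "c - e" "\<tau> - c" "2*\<beta>"] by (intro mult_right_mono) simp_all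
    also have "\<dots> = (1 + \<bar>c - e\<bar>) powr (2*\<beta>) * ((1 + \<bar>\<tau> - c\<bar>) powr \<bar>2*\<beta>\<bar> * exp (- (1 / (2*q)) * (\<tau> - c)^2))
        * exp (- ((\<tau> - c)^2) / (2 * q))"
      unfolding split by (simp add: mult_ac)
    also have "\<dots> \<le> (1 + \<bar>c - e\<bar>) powr (2*\<beta>) * E * exp (- ((\<tau> - c)^2) / (2 * q))"
      by (intro mult_right_mono mult_left_mono weight) auto
    finally show ?thesis by simp
  qed
  then have "(\<integral>\<^sup>+\<tau>. ennreal ((1 + \<bar>\<tau> - e\<bar>) powr (2*\<beta>) * exp (- ((\<tau> - c)^2) / q)) \<partial>lborel)
      \<le> (\<integral>\<^sup>+\<tau>. ennreal ((1 + \<bar>c - e\<bar>) powr (2*\<beta>) * E) * ennreal (exp (- ((\<tau> - c)^2) / (2 * q))) \<partial>lborel)"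
    by (intro nn_integral_mono) (simp add: E_def ennreal_leI flip: ennreal_mult')
  also have "\<dots> = ennreal ((1 + \<bar>c - e\<bar>) powr (2*\<beta>) * E) * ennreal (sqrt (pi * (2 * q)))"
    using nn_integral_shifted_gaussian[of "2*q" c] assms by (simp add: nn_integral_cmult)
  also have "\<dots> = ennreal (E * sqrt (pi * (2 * q)) * (1 + \<bar>c - e\<bar>) powr (2*\<beta>))"
    by (subst ennreal_mult'[symmetric]) (simp_all add: E_def mult_ac)
  finally show ?thesis unfolding E_def .
qed

lemma nn_integral_gauss_bracket_ge:
  assumes "0 < q"
  shows "ennreal (2 powr (- \<bar>2*\<beta>\<bar>) * exp (- 1 / q) * (1 + \<bar>c - e\<bar>) powr (2*\<beta>))
    \<le> (\<integral>\<^sup>+\<tau>. ennreal ((1 + \<bar>\<tau> - e\<bar>) powr (2*\<beta>) * exp (- ((\<tau> - c)^2) / q)) \<partial>lborel)"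
proof -
  define L where "L = 2 powr (- \<bar>2*\<beta>\<bar>) * exp (- 1 / q) * (1 + \<bar>c - e\<bar>) powr (2*\<beta>)"
  have "L \<le> (1 + \<bar>\<tau> - e\<bar>) powr (2*\<beta>) * exp (- ((\<tau> - c)^2) / q)" if "\<tau> \<in> {c..c+1}" for \<tau>
  proof -
    have d: "\<bar>\<tau> - c\<bar> \<le> 1" using that by auto
    have "2 powr (- \<bar>2*\<beta>\<bar>) \<le> (1 + \<bar>\<tau> - c\<bar>) powr (- \<bar>2*\<beta>\<bar>)"
      by (rule powr_mono2') (use d in auto)
    moreover have "exp (- 1 / q) \<le> exp (- ((\<tau> - c)^2) / q)"
      using d assms by (simp add: abs_square_le_1 divide_le_cancel)
    moreover have "L = (2 powr (- \<bar>2*\<beta>\<bar>) * (1 + \<bar>c - e\<bar>) powr (2*\<beta>)) * exp (- 1 / q)"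
      unfolding L_def by (simp add: mult_ac)
    ultimately have "L \<le> ((1 + \<bar>\<tau> - c\<bar>) powr (- \<bar>2*\<beta>\<bar>) * (1 + \<bar>c - e\<bar>) powr (2*\<beta>)) * exp (- ((\<tau> - c)^2) / q)"
      by (simp only:) (intro mult_mono; simp)
    also have "\<dots> \<le> (1 + \<bar>\<tau> - e\<bar>) powr (2*\<beta>) * exp (- ((\<tau> - c)^2) / q)"
      using bracket_powr_add_ge[of "c - e" "2*\<beta>" "\<tau> - c"] by (intro mult_right_mono) (simp_all add: mult_ac)
    finally show ?thesis .
  qed
  then have "(\<integral>\<^sup>+\<tau>. ennreal L * indicator {c..c+1} \<tau> \<partial>lborel)
      \<le> (\<integral>\<^sup>+\<tau>. ennreal ((1 + \<bar>\<tau> - e\<bar>) powr (2*\<beta>) * exp (- ((\<tau> - c)^2) / q)) \<partial>lborel)"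
    by (intro nn_integral_mono) (auto intro: ennreal_leI split: split_indicator)
  then show ?thesis
    by (simp add: L_def nn_integral_cmult_indicator)
qed

lemma gauss_bracket_integral_comparable:
  assumes "0 < q"
  obtains L U where "0 < L" "0 < U"
    "\<And>e c. L * (1 + \<bar>c - e\<bar>) powr (2*\<beta>) \<le> gauss_bracket_integral q \<beta> e c"
    "\<And>e c. gauss_bracket_integral q \<beta> e c \<le> U * (1 + \<bar>c - e\<bar>) powr (2*\<beta>)"
proof
  fix e c
  have upper: "(\<integral>\<^sup>+\<tau>. ennreal ((1 + \<bar>\<tau> - e\<bar>) powr (2*\<beta>) * exp (- ((\<tau> - c)^2) / q)) \<partial>lborel)
      \<le> ennreal (exp (2 * \<beta>^2 * q) * sqrt (pi * (2 * q)) * (1 + \<bar>c - e\<bar>) powr (2*\<beta>))"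
    by (rule nn_integral_gauss_bracket_le[OF assms])
  then show "gauss_bracket_integral q \<beta> e c \<le> exp (2 * \<beta>^2 * q) * sqrt (pi * (2 * q)) * (1 + \<bar>c - e\<bar>) powr (2*\<beta>)"
    unfolding gauss_bracket_integral_def using assms by (simp add: enn2real_leI)
  have "enn2real (ennreal (2 powr (- \<bar>2*\<beta>\<bar>) * exp (- 1 / q) * (1 + \<bar>c - e\<bar>) powr (2*\<beta>))) \<le> gauss_bracket_integral q \<beta> e c"
    unfolding gauss_bracket_integral_def
    using nn_integral_gauss_bracket_ge[OF assms] upper
    by (intro enn2real_mono) (auto simp: top_unique intro: order.strict_trans1)
  then show "2 powr (- \<bar>2*\<beta>\<bar>) * exp (- 1 / q) * (1 + \<bar>c - e\<bar>) powr (2*\<beta>) \<le> gauss_bracket_integral q \<beta> e c"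
    by simp
qed (use assms in simp_all)

lemma Xnorm_wave_sq:
  assumes "0 < a"
  shows "(Xnorm \<alpha> s b (wave A k c a))^2 =
    (1 + \<bar>real_of_int k\<bar>) powr (2 * s) * (cmod A)^2 * (4 * pi^2 * (pi / a)) * gauss_bracket_integral (2*a) b (\<alpha> * (real_of_int k)^3) c"
proof -
  define P where "P = (1 + \<bar>real_of_int k\<bar>) powr (2 * s) * (cmod A)^2 * (4 * pi^2 * (pi / a))"
  define I where "I = (\<integral>\<^sup>+\<tau>. ennreal ((1 + \<bar>\<tau> - \<alpha> * (real_of_int k)^3\<bar>) powr (2*b) * exp (- ((\<tau> - c)^2) / (2*a))) \<partial>lborel)"
  have P: "0 \<le> P" unfolding P_def using assms by simp
  have "(cmod (fourier_TR (wave A k c a) k \<tau>))\<^sup>2 = (cmod A)^2 * (4 * pi^2 * (pi / a)) * exp (- ((\<tau> - c)^2) / (2*a))" for \<tau>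
  proof -
    have "(exp (- ((c-\<tau>)^2 / (4*a))))^2 = exp (2 * (- ((c-\<tau>)^2) / (4*a)))"
      by (simp add: power2_eq_square exp_add[symmetric])
    also have "2 * (- ((c-\<tau>)^2) / (4*a)) = - ((\<tau> - c)^2 / (2*a))"
      using assms by (simp add: power2_commute field_simps)
    finally show ?thesis
      using assms by (simp add: fourier_wave norm_mult power_mult_distrib)
  qed
  then have "(\<integral>\<^sup>+ \<tau>. ennreal ((1 + \<bar>real_of_int k'\<bar>) powr (2 * s)
          * (1 + \<bar>\<tau> - \<alpha> * (real_of_int k') ^ 3\<bar>) powr (2 * b)
          * (cmod (fourier_TR (wave A k c a) k' \<tau>))\<^sup>2) \<partial>lborel)
     = ennreal P * I * indicator {k} k'" for k'
    using assms P
    by (cases "k' = k")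
      (simp_all add: fourier_wave I_def P_def mult_ac flip: nn_integral_cmult ennreal_mult')
  then have "(Xnorm \<alpha> s b (wave A k c a))^2 = enn2real (ennreal P * I)"
    unfolding Xnorm_def by (simp add: nn_integral_cmult_indicator)
  then show ?thesis
    using P by (simp add: enn2real_mult P_def I_def gauss_bracket_integral_def)
qed

section \<open>Reduction to the resonance ratio\<close>

definition resonance :: "real \<Rightarrow> real \<Rightarrow> int \<Rightarrow> int \<Rightarrow> real" where
  "resonance \<alpha>1 \<alpha>2 k1 k2 =
     \<alpha>1 * (real_of_int k1)^3 + \<alpha>2 * (real_of_int k2)^3 - \<alpha>1 * (real_of_int (k1 + k2))^3"

definition resonance_ratio :: "real \<Rightarrow> real \<Rightarrow> real \<Rightarrow> int \<Rightarrow> int \<Rightarrow> real" where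
  "resonance_ratio \<alpha>1 \<alpha>2 s k1 k2 =
     (real_of_int (k1 + k2))^2 * (1 + \<bar>real_of_int (k1 + k2)\<bar>) powr (2 * s)
     / ((1 + \<bar>real_of_int k1\<bar>) powr (2 * s) * (1 + \<bar>real_of_int k2\<bar>) powr (2 * s)
        * (1 + \<bar>resonance \<alpha>1 \<alpha>2 k1 k2\<bar>))"

lemma gauss_bracket_integral_resonance_bound:
  obtains \<kappa> where "0 < \<kappa>" and
    "\<And>e1 e2 e0. \<exists>c1 c2. \<kappa> * gauss_bracket_integral 2 b e1 c1 * gauss_bracket_integral 2 b e2 c2
        \<le> (1 + \<bar>e1 + e2 - e0\<bar>) * gauss_bracket_integral 4 (b - 1) e0 (c1 + c2)"
proof -
  obtain L1 U1 where "0 < L1" and L1: "0 < U1"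
    and "\<And>e c. L1 * (1 + \<bar>c - e\<bar>) powr (2*b) \<le> gauss_bracket_integral 2 b e c"
    and upper: "\<And>e c. gauss_bracket_integral 2 b e c \<le> U1 * (1 + \<bar>c - e\<bar>) powr (2*b)"
    using gauss_bracket_integral_comparable[of 2 b, OF zero_less_numeral] by blast
  obtain L0 U0 where L0: "0 < L0" and "0 < U0"
    and lower: "\<And>e c. L0 * (1 + \<bar>c - e\<bar>) powr (2*(b-1)) \<le> gauss_bracket_integral 4 (b - 1) e c"
    and "\<And>e c. gauss_bracket_integral 4 (b - 1) e c \<le> U0 * (1 + \<bar>c - e\<bar>) powr (2*(b-1))"
    using gauss_bracket_integral_comparable[of 4 "b - 1", OF zero_less_numeral] by blast
  have nonneg: "0 \<le> gauss_bracket_integral q \<beta> e c" for q \<beta> e c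
    by (simp add: gauss_bracket_integral_def)
  show ?thesis
  proof (rule that[of "L0 / U1^2"])
    show "0 < L0 / U1^2" using L0 L1 by simp
    fix e1 e2 e0 :: real
    define D where "D = 1 + \<bar>e1 + e2 - e0\<bar>"
    have D: "1 \<le> D" unfolding D_def by simp
    show "\<exists>c1 c2. L0 / U1^2 * gauss_bracket_integral 2 b e1 c1 * gauss_bracket_integral 2 b e2 c2
        \<le> (1 + \<bar>e1 + e2 - e0\<bar>) * gauss_bracket_integral 4 (b - 1) e0 (c1 + c2)"
    proof (cases "1/2 \<le> b")
      case True
      \<comment> \<open>Both inputs on their characteristic curves: the output is off its curve by the resonance
        \<open>e1 + e2 - e0\<close>, which costs a factor \<open>D\<^bsup>2b-2\<^esup> \<ge> D\<^sup>-\<^sup>1\<close>.\<close>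
      have "L0 / U1^2 * gauss_bracket_integral 2 b e1 e1 * gauss_bracket_integral 2 b e2 e2 \<le> L0 / U1^2 * U1 * U1"
        using upper[of e1 e1] upper[of e2 e2] L0 L1 nonneg by (intro mult_mono) simp_all
      also have "\<dots> = L0 * 1" using L1 by (simp add: power2_eq_square)
      also have "\<dots> \<le> L0 * (D * D powr (2*(b-1)))"
      proof -
        have "D * D powr (2*(b-1)) = D powr (1 + 2*(b-1))"
          by (subst powr_add) (use D in simp)
        moreover have "1 \<le> D powr (1 + 2*(b-1))"
          using D True by (intro ge_one_powr_ge_zero) auto
        ultimately show ?thesis
          using L0 by simp
      qed
      also have "\<dots> \<le> D * gauss_bracket_integral 4 (b - 1) e0 (e1 + e2)"
        using mult_left_mono[OF lower[where e=e0 and c="e1 + e2"], of D] D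
        by (simp add: D_def mult_ac)
      finally show ?thesis unfolding D_def by blast
    next
      case False
      \<comment> \<open>Output and second input on their curves: now the first input pays \<open>D\<^bsup>2b\<^esup> \<le> D\<close>.\<close>
      have "L0 / U1^2 * gauss_bracket_integral 2 b e1 (e0 - e2) * gauss_bracket_integral 2 b e2 e2
          \<le> L0 / U1^2 * (U1 * D powr (2*b)) * U1"
        using upper[where e=e1 and c="e0 - e2"] upper[of e2 e2] L0 L1 nonneg
          abs_minus_commute[of "e0 - e2" e1]
        by (intro mult_mono) (simp_all add: D_def algebra_simps)
      also have "\<dots> = L0 * D powr (2*b)" using L1 by (simp add: power2_eq_square)
      also have "\<dots> \<le> L0 * D"
        using powr_mono[of "2*b" 1 D] D False L0 by simp
      also have "\<dots> \<le> D * gauss_bracket_integral 4 (b - 1) e0 (e0 - e2 + e2)"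
        using mult_left_mono[OF lower[where e=e0 and c="e0 - e2 + e2"], of D] D
        by (simp add: mult.commute)
      finally show ?thesis unfolding D_def by blast
    qed
  qed
qed

lemma Xnorm_wave_pos:
  assumes "0 < a" and "A \<noteq> 0"
  shows "0 < Xnorm \<alpha> s b (wave A k c a)"
proof -
  have "0 < 2*a" using assms by simp
  then obtain L U where "0 < L" "0 < U"
    "\<And>e c. L * (1 + \<bar>c - e\<bar>) powr (2*b) \<le> gauss_bracket_integral (2*a) b e c"
    "\<And>e c. gauss_bracket_integral (2*a) b e c \<le> U * (1 + \<bar>c - e\<bar>) powr (2*b)"
    using gauss_bracket_integral_comparable[of "2*a" b] by blast
  then have "0 < gauss_bracket_integral (2*a) b (\<alpha> * (real_of_int k)^3) c"
    by (smt (verit) mult_pos_pos powr_gt_zero)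
  then have "0 < (Xnorm \<alpha> s b (wave A k c a))^2"
    using assms by (simp add: Xnorm_wave_sq)
  moreover have "0 \<le> Xnorm \<alpha> s b (wave A k c a)"
    by (simp add: Xnorm_def)
  ultimately show ?thesis
    by (simp add: zero_less_power2 order_le_less)
qed

lemma wave_pair_resonance_ratio_bound:
  obtains \<kappa> where "0 < \<kappa>" and
    "\<And>k1 k2. \<exists>c1 c2. \<kappa> * resonance_ratio \<alpha>1 \<alpha>2 s k1 k2
        * (Xnorm \<alpha>1 s b (wave 1 k1 c1 1))^2 * (Xnorm \<alpha>2 s b (wave 1 k2 c2 1))^2
      \<le> (Xnorm \<alpha>1 s (b - 1) (dx_prod (wave 1 k1 c1 1) (wave 1 k2 c2 1)))^2"
proof -
  obtain \<kappa> where \<kappa>: "0 < \<kappa>" and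
    bound: "\<And>e1 e2 e0. \<exists>c1 c2. \<kappa> * gauss_bracket_integral 2 b e1 c1 * gauss_bracket_integral 2 b e2 c2
        \<le> (1 + \<bar>e1 + e2 - e0\<bar>) * gauss_bracket_integral 4 (b - 1) e0 (c1 + c2)"
    using gauss_bracket_integral_resonance_bound by blast
  define P1 where "P1 = 4 * pi^2 * pi"
  define P0 where "P0 = 4 * pi^2 * (pi / 2)"
  show ?thesis
  proof (rule that[of "\<kappa> * P0 / P1^2"])
    show "0 < \<kappa> * P0 / P1^2" using \<kappa> by (simp add: P0_def P1_def)
    fix k1 k2 :: int
    define k where "k = k1 + k2"
    define D where "D = 1 + \<bar>resonance \<alpha>1 \<alpha>2 k1 k2\<bar>"
    obtain c1 c2 where c: "\<kappa> * gauss_bracket_integral 2 b (\<alpha>1 * (real_of_int k1)^3) c1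
        * gauss_bracket_integral 2 b (\<alpha>2 * (real_of_int k2)^3) c2
      \<le> D * gauss_bracket_integral 4 (b - 1) (\<alpha>1 * (real_of_int k)^3) (c1 + c2)"
      using bound[of "\<alpha>1 * (real_of_int k1)^3" "\<alpha>2 * (real_of_int k2)^3" "\<alpha>1 * (real_of_int k)^3"]
      by (auto simp: D_def k_def resonance_def)
    define J1 where "J1 = gauss_bracket_integral 2 b (\<alpha>1 * (real_of_int k1)^3) c1"
    define J2 where "J2 = gauss_bracket_integral 2 b (\<alpha>2 * (real_of_int k2)^3) c2"
    define J0 where "J0 = gauss_bracket_integral 4 (b - 1) (\<alpha>1 * (real_of_int k)^3) (c1 + c2)"
    define p where "p = (\<lambda>j::int. (1 + \<bar>real_of_int j\<bar>) powr (2 * s))"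
    have D: "0 < D" unfolding D_def by (simp add: add_pos_nonneg)
    have "(Xnorm \<alpha>1 s b (wave 1 k1 c1 1))^2 = p k1 * P1 * J1"
      by (simp add: Xnorm_wave_sq p_def P1_def J1_def)
    moreover have "(Xnorm \<alpha>2 s b (wave 1 k2 c2 1))^2 = p k2 * P1 * J2"
      by (simp add: Xnorm_wave_sq p_def P1_def J2_def)
    moreover have "(Xnorm \<alpha>1 s (b - 1) (dx_prod (wave 1 k1 c1 1) (wave 1 k2 c2 1)))^2
        = p k * (real_of_int k)^2 * P0 * J0"
    proof -
      have "(cmod (\<i> * of_int k))^2 = (real_of_int k)^2"
        by (simp add: norm_mult)
      then show ?thesis
        unfolding dx_prod_wave by (simp add: Xnorm_wave_sq p_def P0_def J0_def k_def)
    qed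
    moreover have "resonance_ratio \<alpha>1 \<alpha>2 s k1 k2 = (real_of_int k)^2 * p k / (p k1 * p k2 * D)"
      by (simp add: resonance_ratio_def p_def D_def k_def)
    moreover have "\<kappa> * P0 / P1^2 * ((real_of_int k)^2 * p k / (p k1 * p k2 * D)) * (p k1 * P1 * J1) * (p k2 * P1 * J2)
        = (P0 * (real_of_int k)^2 * p k / D) * (\<kappa> * J1 * J2)"
    proof -
      have "1 + \<bar>x\<bar> \<noteq> 0" for x :: real by linarith
      then show ?thesis
        using D by (simp add: p_def P1_def power2_eq_square field_simps)
    qed
    moreover have "(P0 * (real_of_int k)^2 * p k / D) * (\<kappa> * J1 * J2) \<le> (P0 * (real_of_int k)^2 * p k / D) * (D * J0)"
      using c D by (intro mult_left_mono) (simp_all add: J0_def J1_def J2_def p_def P0_def)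
    moreover have "(P0 * (real_of_int k)^2 * p k / D) * (D * J0) = p k * (real_of_int k)^2 * P0 * J0"
      using D by simp
    ultimately show "\<exists>c1 c2. \<kappa> * P0 / P1^2 * resonance_ratio \<alpha>1 \<alpha>2 s k1 k2
        * (Xnorm \<alpha>1 s b (wave 1 k1 c1 1))^2 * (Xnorm \<alpha>2 s b (wave 1 k2 c2 1))^2
      \<le> (Xnorm \<alpha>1 s (b - 1) (dx_prod (wave 1 k1 c1 1) (wave 1 k2 c2 1)))^2"
      by (intro exI[of _ c1] exI[of _ c2]) simp
  qed
qed

lemma bilinear_estimate_fails_if_ratio_unbounded:
  assumes unbounded: "\<And>M. \<exists>k1 k2. Z k1 k2 \<and> M \<le> resonance_ratio \<alpha>1 \<alpha>2 s k1 k2"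
    and admissible: "\<And>k1 k2 c1 c2. Z k1 k2 \<Longrightarrow> Q (wave 1 k1 c1 1) (wave 1 k2 c2 1)"
  shows "\<not> (\<exists>C. \<forall>w1 w2. Q w1 w2 \<longrightarrow> bilin_est \<alpha>1 \<alpha>2 s b C w1 w2)"
proof
  assume "\<exists>C. \<forall>w1 w2. Q w1 w2 \<longrightarrow> bilin_est \<alpha>1 \<alpha>2 s b C w1 w2"
  then obtain C where C: "\<And>w1 w2. Q w1 w2 \<Longrightarrow> bilin_est \<alpha>1 \<alpha>2 s b C w1 w2" by blast
  obtain \<kappa> where \<kappa>: "0 < \<kappa>" and
    pair: "\<And>k1 k2. \<exists>c1 c2. \<kappa> * resonance_ratio \<alpha>1 \<alpha>2 s k1 k2
        * (Xnorm \<alpha>1 s b (wave 1 k1 c1 1))^2 * (Xnorm \<alpha>2 s b (wave 1 k2 c2 1))^2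
      \<le> (Xnorm \<alpha>1 s (b - 1) (dx_prod (wave 1 k1 c1 1) (wave 1 k2 c2 1)))^2"
    using wave_pair_resonance_ratio_bound by blast
  obtain k1 k2 where Z: "Z k1 k2" and R: "C^2 / \<kappa> + 1 \<le> resonance_ratio \<alpha>1 \<alpha>2 s k1 k2"
    using unbounded by blast
  obtain c1 c2 where c: "\<kappa> * resonance_ratio \<alpha>1 \<alpha>2 s k1 k2
        * (Xnorm \<alpha>1 s b (wave 1 k1 c1 1))^2 * (Xnorm \<alpha>2 s b (wave 1 k2 c2 1))^2
      \<le> (Xnorm \<alpha>1 s (b - 1) (dx_prod (wave 1 k1 c1 1) (wave 1 k2 c2 1)))^2"
    using pair by blast
  define X where "X = Xnorm \<alpha>1 s b (wave 1 k1 c1 1) * Xnorm \<alpha>2 s b (wave 1 k2 c2 1)"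
  define Y where "Y = Xnorm \<alpha>1 s (b - 1) (dx_prod (wave 1 k1 c1 1) (wave 1 k2 c2 1))"
  have X: "0 < X" unfolding X_def by (simp add: Xnorm_wave_pos)
  have "0 \<le> Y" "Y \<le> C * X"
    using C[OF admissible[OF Z]] by (simp_all add: Y_def X_def Xnorm_def bilin_est_def mult.assoc)
  then have "Y^2 \<le> C^2 * X^2" by (metis power_mono power_mult_distrib)
  moreover have "(C^2 + \<kappa>) * X^2 \<le> Y^2"
  proof -
    have "C^2 + \<kappa> \<le> \<kappa> * resonance_ratio \<alpha>1 \<alpha>2 s k1 k2"
      using mult_left_mono[OF R, of \<kappa>] \<kappa> by (simp add: distrib_left)
    then have "(C^2 + \<kappa>) * X^2 \<le> \<kappa> * resonance_ratio \<alpha>1 \<alpha>2 s k1 k2 * X^2"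
      by (rule mult_right_mono) simp
    also have "\<dots> \<le> Y^2"
      using c by (simp add: X_def Y_def power_mult_distrib mult_ac)
    finally show ?thesis .
  qed
  moreover have "(C^2 + \<kappa>) * X^2 = C^2 * X^2 + \<kappa> * X^2"
    by (simp add: algebra_simps)
  moreover have "0 < \<kappa> * X^2" using \<kappa> X by simp
  ultimately show False by linarith
qed

section \<open>Frequencies with unbounded resonance ratio\<close>

lemma unbounded_if_ge_powr:
  fixes f :: "int \<Rightarrow> int \<Rightarrow> real"
  assumes "0 < c" "0 < e"
    and "\<And>T. \<exists>n k1 k2. T \<le> n \<and> Z k1 k2 \<and> c * n powr e \<le> f k1 k2"
  shows "\<exists>k1 k2. Z k1 k2 \<and> M \<le> f k1 k2"
proof -
  define T where "T = (max 1 (M / c)) powr (1 / e)"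
  obtain n k1 k2 where n: "T \<le> n" and Z: "Z k1 k2" and f: "c * n powr e \<le> f k1 k2"
    using assms(3) by blast
  have "M / c \<le> max 1 (M / c)" by simp
  also have "\<dots> = T powr e"
    using assms(2) by (simp add: T_def powr_powr)
  also have "\<dots> \<le> n powr e"
    using n assms(2) by (intro powr_mono2) (auto simp: T_def)
  finally have "M \<le> c * n powr e"
    using assms(1) by (simp add: divide_le_eq mult.commute)
  then show ?thesis
    using Z f by force
qed

lemma resonance_ratio_zero_right: "resonance_ratio \<alpha>1 \<alpha>2 s k 0 = (real_of_int k)^2"
  by (simp add: resonance_ratio_def resonance_def)

lemma resonance_ratio_zero_left: "resonance_ratio \<alpha> \<alpha> s 0 k = (real_of_int k)^2"
  by (simp add: resonance_ratio_def resonance_def)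

lemma int_square_unbounded: "\<exists>k::int. k \<noteq> 0 \<and> M \<le> (real_of_int k)^2"
proof (intro exI conjI)
  define k where "k = \<lceil>\<bar>M\<bar>\<rceil> + 1"
  have k: "1 \<le> real_of_int k" unfolding k_def by simp
  then show "k \<noteq> 0" by auto
  have "M \<le> real_of_int k" unfolding k_def by linarith
  also have "\<dots> \<le> (real_of_int k)^2" using k by (simp add: power2_eq_square)
  finally show "M \<le> (real_of_int k)^2" .
qed

lemma bilinear_estimate_fails_without_mean_zero:
  "\<not> (\<exists>C. \<forall>w1 w2. schwartz_TR w1 \<and> schwartz_TR w2 \<longrightarrow> bilin_est \<alpha>1 \<alpha>2 s b C w1 w2)"
proof (rule bilinear_estimate_fails_if_ratio_unbounded[where Z = "\<lambda>k1 k2. k2 = 0"])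
  fix M
  obtain k :: int where "M \<le> (real_of_int k)^2" using int_square_unbounded by blast
  then show "\<exists>k1 k2. k2 = 0 \<and> M \<le> resonance_ratio \<alpha>1 \<alpha>2 s k1 k2"
    by (auto simp: resonance_ratio_zero_right)
qed (simp add: schwartz_wave)

lemma bilinear_estimate_fails_equal_dispersion:
  "\<not> (\<exists>C. \<forall>w1 w2. schwartz_TR w1 \<and> schwartz_TR w2 \<and> zero_mode w2 \<longrightarrow> bilin_est \<alpha> \<alpha> s b C w1 w2)"
proof (rule bilinear_estimate_fails_if_ratio_unbounded[where Z = "\<lambda>k1 k2. k1 = 0 \<and> k2 \<noteq> 0"])
  fix M
  obtain k :: int where "k \<noteq> 0" "M \<le> (real_of_int k)^2" using int_square_unbounded by blast
  then show "\<exists>k1 k2. (k1 = 0 \<and> k2 \<noteq> 0) \<and> M \<le> resonance_ratio \<alpha> \<alpha> s k1 k2"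
    by (auto simp: resonance_ratio_zero_left)
qed (simp add: schwartz_wave zero_mode_wave)

definition scale_comparable :: "real \<Rightarrow> real \<Rightarrow> real \<Rightarrow> int \<Rightarrow> bool" where
  "scale_comparable a A n k \<longleftrightarrow> a * n \<le> \<bar>real_of_int k\<bar> \<and> \<bar>real_of_int k\<bar> \<le> A * n"

lemma bracket_powr_ge_scale:
  assumes "1 \<le> n" "0 < a" "scale_comparable a A n k"
  shows "min (a powr e) ((A + 1) powr e) * n powr e \<le> (1 + \<bar>real_of_int k\<bar>) powr e"
proof -
  have lo: "a * n \<le> 1 + \<bar>real_of_int k\<bar>" and hi: "1 + \<bar>real_of_int k\<bar> \<le> (A + 1) * n"
    using assms unfolding scale_comparable_def by (simp_all add: algebra_simps)
  have an: "0 < a * n" using assms by simp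
  show ?thesis
  proof (cases "0 \<le> e")
    case True
    have "min (a powr e) ((A + 1) powr e) * n powr e \<le> (a * n) powr e"
      using assms by (simp add: powr_mult mult_right_mono)
    also have "\<dots> \<le> (1 + \<bar>real_of_int k\<bar>) powr e"
      using True an lo by (intro powr_mono2) auto
    finally show ?thesis .
  next
    case False
    have A: "0 < A + 1" using an hi assms(1) by (smt (verit) mult_nonpos_nonneg)
    have "min (a powr e) ((A + 1) powr e) * n powr e \<le> ((A + 1) * n) powr e"
      using A assms by (simp add: powr_mult mult_right_mono)
    also have "\<dots> \<le> (1 + \<bar>real_of_int k\<bar>) powr e"
      using False an lo hi by (intro powr_mono2') auto
    finally show ?thesis .
  qed
qed

lemma resonance_ratio_ge_scale:
  assumes "0 < a" "a \<le> A" "0 < B"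
  obtains c where "0 < c" and
    "\<And>n k1 k2. 1 \<le> n \<Longrightarrow> scale_comparable a A n k1 \<Longrightarrow> scale_comparable a A n k2 \<Longrightarrow>
       scale_comparable a A n (k1 + k2) \<Longrightarrow> 1 + \<bar>resonance \<alpha>1 \<alpha>2 k1 k2\<bar> \<le> B * n powr \<gamma> \<Longrightarrow>
       c * n powr (2 - 2 * s - \<gamma>) \<le> resonance_ratio \<alpha>1 \<alpha>2 s k1 k2"
proof
  define m1 where "m1 = min (a powr (2 * s)) ((A + 1) powr (2 * s))"
  define m2 where "m2 = min (a powr (- (2 * s))) ((A + 1) powr (- (2 * s)))"
  have m: "0 < m1" "0 < m2"
    using assms unfolding m1_def m2_def by simp_all
  show "0 < a^2 * m1 * m2^2 / B" using assms m by simp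
  fix n k1 k2
  assume n: "1 \<le> n" and k1: "scale_comparable a A n k1" and k2: "scale_comparable a A n k2"
    and k: "scale_comparable a A n (k1 + k2)" and H: "1 + \<bar>resonance \<alpha>1 \<alpha>2 k1 k2\<bar> \<le> B * n powr \<gamma>"
  define x where "x = real_of_int (k1 + k2)"
  define p where "p = (\<lambda>e j. (1 + \<bar>real_of_int j\<bar>) powr e)"
  have "(a * n)^2 \<le> \<bar>x\<bar>^2"
    using k assms n unfolding scale_comparable_def x_def by (intro power_mono) auto
  then have "(a * n)^2 \<le> x^2" by simp
  moreover have "m1 * n powr (2 * s) \<le> p (2 * s) (k1 + k2)"
    unfolding m1_def p_def by (rule bracket_powr_ge_scale[OF n assms(1) k])
  moreover have "m2 * n powr (- (2 * s)) \<le> p (- (2 * s)) k1"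
    unfolding m2_def p_def by (rule bracket_powr_ge_scale[OF n assms(1) k1])
  moreover have "m2 * n powr (- (2 * s)) \<le> p (- (2 * s)) k2"
    unfolding m2_def p_def by (rule bracket_powr_ge_scale[OF n assms(1) k2])
  ultimately have num: "(a * n)^2 * (m1 * n powr (2 * s)) * (m2 * n powr (- (2 * s))) * (m2 * n powr (- (2 * s)))
      \<le> x^2 * p (2 * s) (k1 + k2) * p (- (2 * s)) k1 * p (- (2 * s)) k2"
    using m by (intro mult_mono) (simp_all add: p_def)
  have "(a * n)^2 * (m1 * n powr (2 * s)) * (m2 * n powr (- (2 * s))) * (m2 * n powr (- (2 * s))) / (B * n powr \<gamma>)
      \<le> x^2 * p (2 * s) (k1 + k2) * p (- (2 * s)) k1 * p (- (2 * s)) k2 / (1 + \<bar>resonance \<alpha>1 \<alpha>2 k1 k2\<bar>)"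
    by (rule frac_le[OF _ num _ H]) (simp_all add: p_def add_pos_nonneg)
  moreover have "(a * n)^2 * (m1 * n powr (2 * s)) * (m2 * n powr (- (2 * s))) * (m2 * n powr (- (2 * s))) / (B * n powr \<gamma>)
      = a^2 * m1 * m2^2 / B * n powr (2 - 2 * s - \<gamma>)"
  proof -
    have PQ: "n powr (2 * s) * n powr (- (2 * s)) = 1"
      using n by (simp flip: powr_add)
    have "2 - 2 * s - \<gamma> = (2 + - (2 * s)) - \<gamma>" by simp
    then have "n powr (2 - 2 * s - \<gamma>) = n powr 2 * n powr (- (2 * s)) / n powr \<gamma>"
      by (simp only: powr_diff powr_add)
    then have e: "n powr (2 - 2 * s - \<gamma>) = n^2 * n powr (- (2 * s)) / n powr \<gamma>"
      using n by (simp add: powr_numeral)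
    have "(a * n)^2 * (m1 * n powr (2 * s)) * (m2 * n powr (- (2 * s))) * (m2 * n powr (- (2 * s))) / (B * n powr \<gamma>)
        = a^2 * m1 * m2^2 / B * (n^2 * (n powr (2 * s) * n powr (- (2 * s))) * n powr (- (2 * s)) / n powr \<gamma>)"
      by (simp add: power_mult_distrib power2_eq_square)
    then show ?thesis
      unfolding PQ e by simp
  qed
  moreover have "x^2 * p (2 * s) (k1 + k2) * p (- (2 * s)) k1 * p (- (2 * s)) k2 / (1 + \<bar>resonance \<alpha>1 \<alpha>2 k1 k2\<bar>)
      = resonance_ratio \<alpha>1 \<alpha>2 s k1 k2"
    by (simp add: resonance_ratio_def x_def p_def powr_minus divide_inverse mult_ac)
  ultimately show "a^2 * m1 * m2^2 / B * n powr (2 - 2 * s - \<gamma>) \<le> resonance_ratio \<alpha>1 \<alpha>2 s k1 k2"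
    by simp
qed

lemma resonance_ratio_unbounded_on_scale:
  assumes "0 < a" "a \<le> A" "0 < B" "\<gamma> < 2 - 2 * s"
    and family: "\<And>T. \<exists>n k1 k2. T \<le> n \<and> 1 \<le> n \<and> Z k1 k2 \<and> scale_comparable a A n k1 \<and>
      scale_comparable a A n k2 \<and> scale_comparable a A n (k1 + k2) \<and>
      1 + \<bar>resonance \<alpha>1 \<alpha>2 k1 k2\<bar> \<le> B * n powr \<gamma>"
  shows "\<exists>k1 k2. Z k1 k2 \<and> M \<le> resonance_ratio \<alpha>1 \<alpha>2 s k1 k2"
proof -
  obtain c where c: "0 < c" and bound:
    "\<And>n k1 k2. 1 \<le> n \<Longrightarrow> scale_comparable a A n k1 \<Longrightarrow> scale_comparable a A n k2 \<Longrightarrow>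
       scale_comparable a A n (k1 + k2) \<Longrightarrow> 1 + \<bar>resonance \<alpha>1 \<alpha>2 k1 k2\<bar> \<le> B * n powr \<gamma> \<Longrightarrow>
       c * n powr (2 - 2 * s - \<gamma>) \<le> resonance_ratio \<alpha>1 \<alpha>2 s k1 k2"
    using resonance_ratio_ge_scale[OF assms(1-3)] by blast
  show ?thesis
  proof (rule unbounded_if_ge_powr[OF c])
    show "0 < 2 - 2 * s - \<gamma>" using assms(4) by simp
    fix T
    from family[of T] obtain n k1 k2 where "T \<le> n" "1 \<le> n" "Z k1 k2" "scale_comparable a A n k1"
      "scale_comparable a A n k2" "scale_comparable a A n (k1 + k2)"
      "1 + \<bar>resonance \<alpha>1 \<alpha>2 k1 k2\<bar> \<le> B * n powr \<gamma>" by blast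
    with bound show "\<exists>n k1 k2. T \<le> n \<and> Z k1 k2 \<and> c * n powr (2 - 2 * s - \<gamma>) \<le> resonance_ratio \<alpha>1 \<alpha>2 s k1 k2"
      by blast
  qed
qed

lemma bilinear_estimate_fails_below_minus_half:
  assumes "s < -1/2"
  shows "\<not> (\<exists>C. \<forall>w1 w2. schwartz_TR w1 \<and> schwartz_TR w2 \<and> zero_mode w2 \<longrightarrow> bilin_est \<alpha>1 \<alpha>2 s b C w1 w2)"
proof (rule bilinear_estimate_fails_if_ratio_unbounded[where Z = "\<lambda>k1 k2. k2 \<noteq> 0"])
  fix M
  show "\<exists>k1 k2. k2 \<noteq> 0 \<and> M \<le> resonance_ratio \<alpha>1 \<alpha>2 s k1 k2"
  proof (rule resonance_ratio_unbounded_on_scale[where a=1 and A=2 and B="1 + \<bar>\<alpha>2 - 7 * \<alpha>1\<bar>" and \<gamma>=3])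
    fix T :: real
    define N :: int where "N = \<lceil>\<bar>T\<bar>\<rceil> + 1"
    define n where "n = real_of_int N"
    have n: "1 \<le> n" "T \<le> n" unfolding n_def N_def by linarith+
    have "resonance \<alpha>1 \<alpha>2 N N = (\<alpha>2 - 7 * \<alpha>1) * n^3"
      unfolding resonance_def n_def by (simp add: power3_eq_cube algebra_simps)
    moreover have "1 + \<bar>(\<alpha>2 - 7 * \<alpha>1) * n^3\<bar> \<le> (1 + \<bar>\<alpha>2 - 7 * \<alpha>1\<bar>) * n powr 3"
    proof -
      have "1 + \<bar>(\<alpha>2 - 7 * \<alpha>1) * n^3\<bar> = 1 + \<bar>\<alpha>2 - 7 * \<alpha>1\<bar> * n^3"
        using n by (simp add: abs_mult)
      also have "\<dots> \<le> (1 + \<bar>\<alpha>2 - 7 * \<alpha>1\<bar>) * n^3"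
        using n by (simp add: algebra_simps)
      finally show ?thesis
        using n by (simp add: powr_numeral)
    qed
    ultimately show "\<exists>n k1 k2. T \<le> n \<and> 1 \<le> n \<and> k2 \<noteq> 0 \<and> scale_comparable 1 2 n k1 \<and>
      scale_comparable 1 2 n k2 \<and> scale_comparable 1 2 n (k1 + k2) \<and>
      1 + \<bar>resonance \<alpha>1 \<alpha>2 k1 k2\<bar> \<le> (1 + \<bar>\<alpha>2 - 7 * \<alpha>1\<bar>) * n powr 3"
      using n by (intro exI[of _ n] exI[of _ N]) (auto simp: scale_comparable_def n_def)
  qed (use assms in auto)
qed (simp add: schwartz_wave zero_mode_wave)

lemma resonance_ratio_high_high_to_low:
  assumes "s \<le> 0" and "1 \<le> N"
  shows "2 powr (2 * s) / (1 + 3 * \<bar>\<alpha>\<bar>) * (real_of_int N + 1) powr (- 4 * s - 2)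
    \<le> resonance_ratio \<alpha> \<alpha> s (N + 1) (- N)"
proof -
  define n where "n = real_of_int N + 1"
  have n: "2 \<le> n" unfolding n_def using assms by simp
  have "resonance \<alpha> \<alpha> (N + 1) (- N) = 3 * \<alpha> * (n - 1) * n"
    unfolding resonance_def n_def by (simp add: power3_eq_cube algebra_simps)
  moreover have "\<bar>3 * \<alpha> * (n - 1) * n\<bar> \<le> 3 * \<bar>\<alpha>\<bar> * n^2"
  proof -
    have "\<bar>3 * \<alpha> * (n - 1) * n\<bar> = 3 * \<bar>\<alpha>\<bar> * ((n - 1) * n)"
      using n by (simp add: abs_mult)
    also have "\<dots> \<le> 3 * \<bar>\<alpha>\<bar> * n^2"
      using n by (intro mult_left_mono) (simp_all add: power2_eq_square)
    finally show ?thesis .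
  qed
  moreover have "1 \<le> n^2" using n by (simp add: one_le_power)
  moreover have "(1 + 3 * \<bar>\<alpha>\<bar>) * n powr 2 = n^2 + 3 * \<bar>\<alpha>\<bar> * n^2"
    using n by (simp add: powr_numeral algebra_simps)
  ultimately have res: "1 + \<bar>resonance \<alpha> \<alpha> (N + 1) (- N)\<bar> \<le> (1 + 3 * \<bar>\<alpha>\<bar>) * n powr 2"
    by linarith
  have "(n + 1) powr (2 * s) \<le> n powr (2 * s)"
    using assms n by (intro powr_mono2') auto
  then have "n powr (2 * s) * (n + 1) powr (2 * s) * (1 + \<bar>resonance \<alpha> \<alpha> (N + 1) (- N)\<bar>)
      \<le> n powr (2 * s) * n powr (2 * s) * ((1 + 3 * \<bar>\<alpha>\<bar>) * n powr 2)"
    using res by (intro mult_mono) simp_all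
  also have "\<dots> = (1 + 3 * \<bar>\<alpha>\<bar>) * n powr (2 * s + 2 * s + 2)"
    by (simp only: powr_add) (simp add: mult_ac)
  also have "2 * s + 2 * s + 2 = 4 * s + 2" by simp
  finally have "2 powr (2 * s) / ((1 + 3 * \<bar>\<alpha>\<bar>) * n powr (4 * s + 2))
      \<le> 2 powr (2 * s) / (n powr (2 * s) * (n + 1) powr (2 * s) * (1 + \<bar>resonance \<alpha> \<alpha> (N + 1) (- N)\<bar>))"
    using n by (intro divide_left_mono) (simp_all add: add_pos_nonneg)
  moreover have "resonance_ratio \<alpha> \<alpha> s (N + 1) (- N)
      = 2 powr (2 * s) / (n powr (2 * s) * (n + 1) powr (2 * s) * (1 + \<bar>resonance \<alpha> \<alpha> (N + 1) (- N)\<bar>))"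
    using assms unfolding resonance_ratio_def n_def by (simp add: add.commute)
  moreover have "n powr (- 4 * s - 2) = 1 / n powr (4 * s + 2)"
    by (simp add: powr_minus_divide[symmetric])
  ultimately show ?thesis
    unfolding n_def[symmetric] by simp
qed

lemma bilinear_estimate_fails_below_minus_half_equal_dispersion:
  assumes "s < -1/2"
  shows "\<not> (\<exists>C. \<forall>w1 w2. schwartz_TR w1 \<and> schwartz_TR w2 \<and> zero_mode w1 \<and> zero_mode w2 \<longrightarrow>
    bilin_est \<alpha> \<alpha> s b C w1 w2)"
proof (rule bilinear_estimate_fails_if_ratio_unbounded[where Z = "\<lambda>k1 k2. k1 \<noteq> 0 \<and> k2 \<noteq> 0"])
  fix M
  show "\<exists>k1 k2. (k1 \<noteq> 0 \<and> k2 \<noteq> 0) \<and> M \<le> resonance_ratio \<alpha> \<alpha> s k1 k2"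
  proof (rule unbounded_if_ge_powr)
    show "0 < 2 powr (2 * s) / (1 + 3 * \<bar>\<alpha>\<bar>)" by (simp add: add_pos_nonneg)
    show "0 < - 4 * s - 2" using assms by simp
    fix T :: real
    define N :: int where "N = \<lceil>\<bar>T\<bar>\<rceil> + 1"
    have N: "1 \<le> N" "T \<le> real_of_int N + 1" unfolding N_def by linarith+
    then show "\<exists>n k1 k2. T \<le> n \<and> (k1 \<noteq> 0 \<and> k2 \<noteq> 0) \<and>
        2 powr (2 * s) / (1 + 3 * \<bar>\<alpha>\<bar>) * n powr (- 4 * s - 2) \<le> resonance_ratio \<alpha> \<alpha> s k1 k2"
      using resonance_ratio_high_high_to_low[of s N \<alpha>] assms
      by (intro exI[of _ "real_of_int N + 1"] exI[of _ "N + 1"] exI[of _ "- N"]) auto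
  qed
qed (simp add: schwartz_wave zero_mode_wave)

section \<open>Diophantine approximation of \<open>\<surd>(12r - 3)\<close>\<close>

definition good_approximations :: "real \<Rightarrow> real \<Rightarrow> (int \<times> int) set" where
  "good_approximations \<rho> \<mu> = {(m, n). n \<noteq> 0 \<and>
      0 < \<bar>\<rho> - real_of_int m / real_of_int n\<bar> \<and>
      \<bar>\<rho> - real_of_int m / real_of_int n\<bar> < \<bar>real_of_int n\<bar> powr (- \<mu>)}"

lemma irr_exp_good_approximations: "irr_exp \<rho> = Sup {ereal \<mu> | \<mu>. infinite (good_approximations \<rho> \<mu>)}"
  unfolding irr_exp_def good_approximations_def ..

lemma good_approximations_antimono:
  assumes "\<mu> \<le> \<mu>'"
  shows "good_approximations \<rho> \<mu>' \<subseteq> good_approximations \<rho> \<mu>"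
proof
  fix p assume "p \<in> good_approximations \<rho> \<mu>'"
  moreover obtain m n where p: "p = (m, n)" by (cases p)
  ultimately have "n \<noteq> 0" and "\<bar>\<rho> - real_of_int m / real_of_int n\<bar> < \<bar>real_of_int n\<bar> powr (- \<mu>')"
    by (auto simp: good_approximations_def)
  moreover have "\<bar>real_of_int n\<bar> powr (- \<mu>') \<le> \<bar>real_of_int n\<bar> powr (- \<mu>)"
    using \<open>n \<noteq> 0\<close> assms by (intro powr_mono) linarith+
  ultimately show "p \<in> good_approximations \<rho> \<mu>"
    using \<open>p \<in> good_approximations \<rho> \<mu>'\<close> by (auto simp: good_approximations_def p)
qed

lemma infinite_good_approximations_below_irr_exp:
  assumes "ereal \<mu> < irr_exp \<rho>"
  shows "infinite (good_approximations \<rho> \<mu>)"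
proof -
  obtain \<mu>' where "infinite (good_approximations \<rho> \<mu>')" "\<mu> < \<mu>'"
    using assms unfolding irr_exp_good_approximations less_Sup_iff by auto
  then show ?thesis
    using good_approximations_antimono[of \<mu> \<mu>' \<rho>] infinite_super by auto
qed

lemma infinite_good_approximations_irrational:
  assumes "\<rho> \<notin> \<rat>" and "\<mu> \<le> 2"
  shows "infinite (good_approximations \<rho> \<mu>)"
proof -
  have "approx_set \<rho> \<subseteq> good_approximations \<rho> \<mu>"
  proof
    fix p assume "p \<in> approx_set \<rho>"
    then obtain h k where p: "p = (h, k)" and k: "k > 0"
      and lt: "\<bar>\<rho> - of_int h / of_int k\<bar> < 1 / (of_int k)^2"
      unfolding approx_set_def by auto
    have "\<rho> \<noteq> of_int h / of_int k"
      using assms(1) by auto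
    moreover have "1 / (of_int k)^2 \<le> real_of_int k powr (- \<mu>)"
    proof -
      have "1 / (of_int k)^2 = real_of_int k powr (-2)"
        using k by (simp add: powr_minus_divide)
      also have "\<dots> \<le> real_of_int k powr (- \<mu>)"
        using assms(2) k by (intro powr_mono) simp_all
      finally show ?thesis .
    qed
    ultimately show "p \<in> good_approximations \<rho> \<mu>"
      using p k lt by (auto simp: good_approximations_def)
  qed
  moreover have "infinite (approx_set \<rho>)"
    using assms(1) rational_iff_finite_approx_set by blast
  ultimately show ?thesis using infinite_super by blast
qed

lemma irr_exp_irrational_ge_2:
  assumes "\<rho> \<notin> \<rat>"
  shows "2 \<le> irr_exp \<rho>"
proof (rule ccontr)
  assume "\<not> 2 \<le> irr_exp \<rho>"
  then have "irr_exp \<rho> < ereal 2" by simp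
  then obtain z where z: "irr_exp \<rho> < ereal z" "ereal z < ereal 2"
    using ereal_dense2 by blast
  then have "infinite (good_approximations \<rho> z)"
    using infinite_good_approximations_irrational[OF assms] by simp
  then have "ereal z \<le> irr_exp \<rho>"
    unfolding irr_exp_good_approximations by (intro Sup_upper) auto
  then show False using z by simp
qed

lemma good_approximation_large_denominator:
  assumes "infinite (good_approximations \<rho> \<mu>)" and "0 \<le> \<mu>"
  shows "\<exists>m n. (m, n) \<in> good_approximations \<rho> \<mu> \<and> B < real_of_int n"
proof (rule ccontr)
  assume "\<not> ?thesis"
  then have small: "real_of_int n \<le> B" if "(m, n) \<in> good_approximations \<rho> \<mu>" for m n
    using that by force
  define K where "K = \<lceil>\<bar>B\<bar>\<rceil>"
  define L where "L = \<lceil>\<bar>B\<bar> * (\<bar>\<rho>\<bar> + 1)\<rceil>"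
  \<comment> \<open>Good approximations come in pairs \<open>(m, n)\<close>, \<open>(-m, -n)\<close>, so \<open>|n|\<close> is bounded as well.\<close>
  have "good_approximations \<rho> \<mu> \<subseteq> {-L..L} \<times> {-K..K}"
  proof
    fix p assume p: "p \<in> good_approximations \<rho> \<mu>"
    obtain m n where mn: "p = (m, n)" by (cases p)
    have "(- m, - n) \<in> good_approximations \<rho> \<mu>"
      using p mn unfolding good_approximations_def by auto
    then have nB: "\<bar>real_of_int n\<bar> \<le> \<bar>B\<bar>"
      using small[of m n] small[of "- m" "- n"] p mn by auto
    have n: "1 \<le> \<bar>real_of_int n\<bar>" and lt: "\<bar>\<rho> - real_of_int m / real_of_int n\<bar> < \<bar>real_of_int n\<bar> powr (- \<mu>)"
      using p mn unfolding good_approximations_def by auto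
    have "\<bar>real_of_int n\<bar> powr (- \<mu>) \<le> 1"
      using n assms(2) by (simp add: powr_le_one_le ge_one_powr_ge_zero powr_minus_divide)
    then have "\<bar>real_of_int m / real_of_int n\<bar> \<le> \<bar>\<rho>\<bar> + 1" using lt by linarith
    then have "\<bar>real_of_int m\<bar> \<le> (\<bar>\<rho>\<bar> + 1) * \<bar>real_of_int n\<bar>"
      using n by (simp add: abs_div divide_le_eq)
    also have "\<dots> \<le> \<bar>B\<bar> * (\<bar>\<rho>\<bar> + 1)"
      using mult_right_mono[OF nB, of "\<bar>\<rho>\<bar> + 1"] by (simp add: mult.commute)
    finally have "\<bar>m\<bar> \<le> L" unfolding L_def by linarith
    moreover have "\<bar>n\<bar> \<le> K" unfolding K_def using nB by linarith
    ultimately show "p \<in> {-L..L} \<times> {-K..K}" using mn by auto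
  qed
  then have "finite (good_approximations \<rho> \<mu>)" by (rule finite_subset) simp
  then show False using assms(1) by simp
qed

text \<open>Unlike in the irrationality exponent, exact approximations \<open>\<rho> n = m\<close> are allowed.\<close>

definition approximable :: "real \<Rightarrow> real \<Rightarrow> bool" where
  "approximable \<rho> \<mu> \<longleftrightarrow>
     (\<forall>T. \<exists>m n :: int. T \<le> real_of_int n \<and> \<bar>\<rho> * real_of_int n - real_of_int m\<bar> \<le> real_of_int n powr (1 - \<mu>))"

lemma approximable_below_irr_exp:
  assumes "0 \<le> \<mu>" and "ereal \<mu> < irr_exp \<rho>"
  shows "approximable \<rho> \<mu>"
  unfolding approximable_def
proof
  fix T :: real
  obtain m n where mn: "(m, n) \<in> good_approximations \<rho> \<mu>" and n: "max T 0 < real_of_int n"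
    using good_approximation_large_denominator[OF infinite_good_approximations_below_irr_exp[OF assms(2)] assms(1)]
    by blast
  have "\<bar>\<rho> * real_of_int n - real_of_int m\<bar> = real_of_int n * \<bar>\<rho> - real_of_int m / real_of_int n\<bar>"
    using n by (simp add: abs_mult[symmetric] field_simps)
  also have "\<dots> \<le> real_of_int n * real_of_int n powr (- \<mu>)"
    using mn n by (intro mult_left_mono) (auto simp: good_approximations_def)
  also have "\<dots> = real_of_int n powr (1 - \<mu>)"
    using n by (simp add: powr_diff powr_minus_divide)
  finally show "\<exists>m n :: int. T \<le> real_of_int n \<and> \<bar>\<rho> * real_of_int n - real_of_int m\<bar> \<le> real_of_int n powr (1 - \<mu>)"
    using n by (intro exI[of _ m] exI[of _ n]) auto
qed

lemma approximable_rational: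
  assumes "\<rho> \<in> \<rat>"
  shows "approximable \<rho> \<mu>"
  unfolding approximable_def
proof
  fix T :: real
  obtain p q :: int where q: "0 < q" and pq: "\<rho> = of_int p / of_int q"
    using assms by (blast elim: Rats_cases')
  define N :: int where "N = \<lceil>\<bar>T\<bar>\<rceil> + 1"
  have N: "1 \<le> N" "T \<le> real_of_int N" unfolding N_def by linarith+
  moreover have "N \<le> q * N"
    using mult_right_mono[of 1 q N] q N(1) by simp
  ultimately have "T \<le> real_of_int (q * N)"
    by linarith
  moreover have exact: "\<rho> * real_of_int (q * N) - real_of_int (p * N) = 0"
    using q by (simp add: pq)
  ultimately have "T \<le> real_of_int (q * N) \<and>
      \<bar>\<rho> * real_of_int (q * N) - real_of_int (p * N)\<bar> \<le> real_of_int (q * N) powr (1 - \<mu>)"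
    unfolding exact by simp
  then show "\<exists>m n :: int. T \<le> real_of_int n \<and> \<bar>\<rho> * real_of_int n - real_of_int m\<bar> \<le> real_of_int n powr (1 - \<mu>)"
    by blast
qed

lemma s_r_le_1: "s_r r \<le> 1"
proof (cases "2 \<le> sigma_r r \<and> sigma_r r < 3")
  case True
  then obtain x where "sigma_r r = ereal x" "x < 3" by (cases "sigma_r r") auto
  then show ?thesis unfolding s_r_def using True by simp
qed (auto simp: s_r_def)

lemma approximable_exponent_above_s_r:
  assumes "s < s_r r"
  shows "\<exists>\<mu>. 1 < \<mu> \<and> \<mu> \<le> 3 \<and> 2 * s + 1 < \<mu> \<and> approximable (sqrt (12 * r - 3)) \<mu>"
proof (cases "sqrt (12 * r - 3) \<in> \<rat>")
  case True
  have "2 * s + 1 < 3" using assms s_r_le_1[of r] by simp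
  with True show ?thesis
    by (intro exI[of _ 3]) (simp add: approximable_rational)
next
  case False
  have \<sigma>: "2 \<le> sigma_r r"
    unfolding sigma_r_def by (rule irr_exp_irrational_ge_2[OF False])
  have "ereal (max 1 (2 * s + 1)) < min 3 (sigma_r r)"
  proof (cases "sigma_r r < 3")
    case True
    then obtain x where x: "sigma_r r = ereal x" "2 \<le> x" "x < 3"
      using \<sigma> by (cases "sigma_r r") auto
    then have "s < (x - 1) / 2" using assms True \<sigma> by (simp add: s_r_def)
    then show ?thesis using x by simp
  next
    case False
    then have "s < 1" using assms by (simp add: s_r_def)
    then show ?thesis using False \<sigma> by (auto simp: min_def not_less)
  qed
  then obtain \<mu> where \<mu>: "ereal (max 1 (2 * s + 1)) < ereal \<mu>" "ereal \<mu> < min 3 (sigma_r r)"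
    using ereal_dense2 by blast
  then have "approximable (sqrt (12 * r - 3)) \<mu>"
    by (intro approximable_below_irr_exp) (simp_all add: sigma_r_def)
  with \<mu> show ?thesis by auto
qed

lemma resonance_approximation:
  "resonance \<alpha>1 (r * \<alpha>1) (m - 3 * n) (6 * n) =
     18 * \<alpha>1 * real_of_int n * ((12 * r - 3) * (real_of_int n)^2 - (real_of_int m)^2)"
  unfolding resonance_def by (simp add: power3_eq_cube power2_eq_square algebra_simps)

lemma approximation_frequencies_scale_comparable:
  fixes m n :: int
  assumes "0 \<le> \<rho>" and "1 \<le> real_of_int n" and "2 \<le> \<bar>\<rho> - 3\<bar> * real_of_int n"
    and "\<bar>\<rho> * real_of_int n - real_of_int m\<bar> \<le> 1"
  defines "a \<equiv> min 2 (\<bar>\<rho> - 3\<bar> / 2)"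
  shows "scale_comparable a (\<rho> + 7) (real_of_int n) (m - 3 * n)"
    and "scale_comparable a (\<rho> + 7) (real_of_int n) (6 * n)"
    and "scale_comparable a (\<rho> + 7) (real_of_int n) (m - 3 * n + 6 * n)"
proof -
  define x where "x = real_of_int n"
  define d where "d = \<rho> * x - real_of_int m"
  have "a \<le> 2" unfolding a_def by (rule min.cobounded1)
  moreover have "a \<le> \<bar>\<rho> - 3\<bar> / 2" unfolding a_def by (rule min.cobounded2)
  ultimately
  have an: "a * x \<le> 2 * x" "a * x \<le> \<bar>\<rho> - 3\<bar> * x / 2"
    using assms(2) unfolding x_def by (simp_all add: mult_right_mono)
  have x: "1 \<le> x" "0 \<le> \<rho> * x" "2 \<le> \<bar>\<rho> - 3\<bar> * x" and d: "\<bar>d\<bar> \<le> 1"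
    using assms(1-4) by (simp_all add: x_def d_def mult.commute)
  have "\<bar>(\<rho> - 3) * x\<bar> - \<bar>d\<bar> \<le> \<bar>(\<rho> - 3) * x - d\<bar>" "\<bar>(\<rho> - 3) * x - d\<bar> \<le> \<bar>(\<rho> - 3) * x\<bar> + \<bar>d\<bar>"
    by (rule abs_triangle_ineq2, rule abs_triangle_ineq4)
  moreover have "\<bar>(\<rho> - 3) * x\<bar> = \<bar>\<rho> - 3\<bar> * x"
    using x by (simp add: abs_mult)
  moreover have "\<bar>\<rho> - 3\<bar> * x \<le> \<rho> * x + 3 * x"
    using assms(1) x mult_right_mono[of "\<bar>\<rho> - 3\<bar>" "\<rho> + 3" x] by (simp add: distrib_right)
  moreover have "(\<rho> + 7) * x = \<rho> * x + 7 * x" by (simp add: distrib_right)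
  moreover have "real_of_int (m - 3 * n) = (\<rho> - 3) * x - d"
    unfolding d_def x_def by (simp add: algebra_simps)
  ultimately show "scale_comparable a (\<rho> + 7) (real_of_int n) (m - 3 * n)"
    using an x d unfolding scale_comparable_def x_def[symmetric] by linarith
  show "scale_comparable a (\<rho> + 7) (real_of_int n) (6 * n)"
    using an assms(1,2) unfolding scale_comparable_def x_def by (simp add: algebra_simps)
  have "real_of_int (m - 3 * n + 6 * n) = \<rho> * x + 3 * x - d"
    unfolding d_def x_def by (simp add: algebra_simps)
  moreover have "(\<rho> + 7) * x = \<rho> * x + 7 * x" by (simp add: distrib_right)
  ultimately show "scale_comparable a (\<rho> + 7) (real_of_int n) (m - 3 * n + 6 * n)"
    using an x d unfolding scale_comparable_def x_def[symmetric] by linarith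
qed

lemma resonance_approximation_bound:
  fixes m n :: int
  assumes "1/4 \<le> r" "1 < \<mu>" "\<mu> \<le> 3" "1 \<le> real_of_int n"
    and "\<bar>sqrt (12 * r - 3) * real_of_int n - real_of_int m\<bar> \<le> real_of_int n powr (1 - \<mu>)"
  shows "1 + \<bar>resonance \<alpha>1 (r * \<alpha>1) (m - 3 * n) (6 * n)\<bar>
    \<le> (1 + 18 * \<bar>\<alpha>1\<bar> * (2 * sqrt (12 * r - 3) + 1)) * real_of_int n powr (3 - \<mu>)"
proof -
  define \<rho> where "\<rho> = sqrt (12 * r - 3)"
  define x where "x = real_of_int n"
  define d where "d = \<rho> * x - real_of_int m"
  define C where "C = 18 * \<bar>\<alpha>1\<bar> * (2 * \<rho> + 1)"
  have \<rho>: "0 \<le> \<rho>" "\<rho>^2 = 12 * r - 3" using assms(1) by (simp_all add: \<rho>_def)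
  have x: "1 \<le> x" "0 \<le> \<rho> * x" using \<rho> assms(4) by (simp_all add: x_def)
  have d: "\<bar>d\<bar> \<le> x powr (1 - \<mu>)" using assms(5) by (simp add: d_def x_def \<rho>_def)
  also have "\<dots> \<le> 1" using powr_mono[of "1 - \<mu>" 0 x] x assms(2) by simp
  finally have "\<bar>\<rho> * x + real_of_int m\<bar> \<le> (2 * \<rho> + 1) * x"
    using x unfolding d_def abs_le_iff by (simp add: distrib_right)
  moreover have "resonance \<alpha>1 (r * \<alpha>1) (m - 3 * n) (6 * n) = 18 * \<alpha>1 * x * (d * (\<rho> * x + real_of_int m))"
    unfolding resonance_approximation \<rho>(2)[symmetric] d_def x_def by (simp add: power2_eq_square algebra_simps)
  ultimately have "\<bar>resonance \<alpha>1 (r * \<alpha>1) (m - 3 * n) (6 * n)\<bar> \<le> 18 * \<bar>\<alpha>1\<bar> * x * (\<bar>d\<bar> * ((2 * \<rho> + 1) * x))"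
    using x by (simp add: abs_mult mult_left_mono)
  also have "\<dots> = C * x^2 * \<bar>d\<bar>"
    by (simp add: C_def power2_eq_square mult_ac)
  also have "\<dots> \<le> C * x^2 * x powr (1 - \<mu>)"
    using d \<rho>(1) by (intro mult_left_mono) (simp_all add: C_def)
  also have "\<dots> = C * x powr (3 - \<mu>)"
  proof -
    have "x powr (3 - \<mu>) = x powr (2 + (1 - \<mu>))" by simp
    also have "\<dots> = x^2 * x powr (1 - \<mu>)"
      by (simp only: powr_add) (use x in \<open>simp add: powr_numeral\<close>)
    finally show ?thesis by (simp add: mult.assoc)
  qed
  finally have "1 + \<bar>resonance \<alpha>1 (r * \<alpha>1) (m - 3 * n) (6 * n)\<bar> \<le> 1 + C * x powr (3 - \<mu>)"
    by simp
  also have "\<dots> \<le> (1 + C) * x powr (3 - \<mu>)"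
    using x assms(3) by (simp add: ge_one_powr_ge_zero algebra_simps)
  finally show ?thesis
    unfolding C_def x_def \<rho>_def .
qed

lemma resonance_ratio_unbounded_if_approximable:
  assumes "1/4 \<le> r" "r \<noteq> 1" "1 < \<mu>" "\<mu> \<le> 3" "2 * s + 1 < \<mu>"
    and "approximable (sqrt (12 * r - 3)) \<mu>"
  shows "\<exists>k1 k2. k2 \<noteq> 0 \<and> M \<le> resonance_ratio \<alpha>1 (r * \<alpha>1) s k1 k2"
proof -
  define \<rho> where "\<rho> = sqrt (12 * r - 3)"
  define g where "g = \<bar>\<rho> - 3\<bar>"
  define C where "C = 18 * \<bar>\<alpha>1\<bar> * (2 * \<rho> + 1)"
  have \<rho>: "0 \<le> \<rho>" "\<rho>^2 = 12 * r - 3" using assms(1) by (simp_all add: \<rho>_def)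
  then have "\<rho> \<noteq> 3" using assms(2) by auto
  then have g: "0 < g" unfolding g_def by simp
  show ?thesis
  proof (rule resonance_ratio_unbounded_on_scale[where a = "min 2 (g / 2)" and A = "\<rho> + 7"
        and B = "1 + C" and \<gamma> = "3 - \<mu>"])
    show "0 < min 2 (g / 2)" "min 2 (g / 2) \<le> \<rho> + 7" "0 < 1 + C" "3 - \<mu> < 2 - 2 * s"
      using g \<rho>(1) assms(5) by (simp_all add: C_def add_pos_nonneg)
    fix T
    obtain m n where n: "max T (max 1 (2 / g)) \<le> real_of_int n"
      and approx: "\<bar>\<rho> * real_of_int n - real_of_int m\<bar> \<le> real_of_int n powr (1 - \<mu>)"
      using assms(6) unfolding approximable_def \<rho>_def by blast
    have x: "T \<le> real_of_int n" "1 \<le> real_of_int n" "2 \<le> g * real_of_int n"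
      using n g by (auto simp: field_simps)
    have "real_of_int n powr (1 - \<mu>) \<le> 1"
      using powr_mono[of "1 - \<mu>" 0 "real_of_int n"] x assms(3) by simp
    then have d: "\<bar>\<rho> * real_of_int n - real_of_int m\<bar> \<le> 1" using approx by linarith
    show "\<exists>n k1 k2. T \<le> n \<and> 1 \<le> n \<and> k2 \<noteq> 0 \<and>
      scale_comparable (min 2 (g / 2)) (\<rho> + 7) n k1 \<and> scale_comparable (min 2 (g / 2)) (\<rho> + 7) n k2 \<and>
      scale_comparable (min 2 (g / 2)) (\<rho> + 7) n (k1 + k2) \<and>
      1 + \<bar>resonance \<alpha>1 (r * \<alpha>1) k1 k2\<bar> \<le> (1 + C) * n powr (3 - \<mu>)"
      using x approximation_frequencies_scale_comparable[OF \<rho>(1) x(2) _ d]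
        resonance_approximation_bound[OF assms(1,3,4) x(2) approx[unfolded \<rho>_def], of \<alpha>1]
      unfolding g_def C_def \<rho>_def
      by (intro exI[of _ "real_of_int n"] exI[of _ "m - 3 * n"] exI[of _ "6 * n"]) auto
  qed
qed

lemma bilinear_estimate_fails_below_s_r:
  assumes "\<alpha>1 \<noteq> 0" "1/4 \<le> \<alpha>2 / \<alpha>1" "\<alpha>2 / \<alpha>1 \<noteq> 1" "s < s_r (\<alpha>2 / \<alpha>1)"
  shows "\<not> (\<exists>C. \<forall>w1 w2. schwartz_TR w1 \<and> schwartz_TR w2 \<and> zero_mode w2 \<longrightarrow> bilin_est \<alpha>1 \<alpha>2 s b C w1 w2)"
proof (rule bilinear_estimate_fails_if_ratio_unbounded[where Z = "\<lambda>k1 k2. k2 \<noteq> 0"])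
  fix M
  obtain \<mu> where "1 < \<mu>" "\<mu> \<le> 3" "2 * s + 1 < \<mu>" "approximable (sqrt (12 * (\<alpha>2 / \<alpha>1) - 3)) \<mu>"
    using approximable_exponent_above_s_r[OF assms(4)] by blast
  then show "\<exists>k1 k2. k2 \<noteq> 0 \<and> M \<le> resonance_ratio \<alpha>1 \<alpha>2 s k1 k2"
    using resonance_ratio_unbounded_if_approximable[OF assms(2,3), of \<mu> s M \<alpha>1] assms(1) by simp
qed (simp add: schwartz_wave zero_mode_wave)

theorem proposition4p2:
  fixes \<alpha>1 \<alpha>2 :: real
  assumes "\<alpha>1 \<noteq> 0" and "\<alpha>2 \<noteq> 0"
  shows
   "(\<forall>b s. \<alpha>2 / \<alpha>1 < 1/4 \<and> s < -1/2 \<longrightarrow>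
       \<not> (\<exists>C. \<forall>w1 w2. schwartz_TR w1 \<and> schwartz_TR w2 \<and> zero_mode w2 \<longrightarrow> bilin_est \<alpha>1 \<alpha>2 s b C w1 w2))
    \<and> (\<forall>b s. \<alpha>2 / \<alpha>1 = 1 \<and> s < -1/2 \<longrightarrow>
       \<not> (\<exists>C. \<forall>w1 w2. schwartz_TR w1 \<and> schwartz_TR w2 \<and> zero_mode w1 \<and> zero_mode w2 \<longrightarrow> bilin_est \<alpha>1 \<alpha>2 s b C w1 w2))
    \<and> (\<forall>b s. \<alpha>2 / \<alpha>1 = 1 \<longrightarrow>
       \<not> (\<exists>C. \<forall>w1 w2. schwartz_TR w1 \<and> schwartz_TR w2 \<and> zero_mode w2 \<longrightarrow> bilin_est \<alpha>1 \<alpha>2 s b C w1 w2))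
    \<and> (\<forall>b s. 1/4 \<le> \<alpha>2 / \<alpha>1 \<and> \<alpha>2 / \<alpha>1 \<noteq> 1 \<and> s < s_r (\<alpha>2 / \<alpha>1) \<longrightarrow>
       \<not> (\<exists>C. \<forall>w1 w2. schwartz_TR w1 \<and> schwartz_TR w2 \<and> zero_mode w2 \<longrightarrow> bilin_est \<alpha>1 \<alpha>2 s b C w1 w2))
    \<and> (\<forall>b s. \<not> (\<exists>C. \<forall>w1 w2. schwartz_TR w1 \<and> schwartz_TR w2 \<longrightarrow> bilin_est \<alpha>1 \<alpha>2 s b C w1 w2))"
proof (intro conjI allI impI)
  have equal_dispersion: "\<alpha>2 = \<alpha>1" if "\<alpha>2 / \<alpha>1 = 1"
    using that assms(1) by simp
  fix b s :: real
  show "\<not> (\<exists>C. \<forall>w1 w2. schwartz_TR w1 \<and> schwartz_TR w2 \<and> zero_mode w2 \<longrightarrow> bilin_est \<alpha>1 \<alpha>2 s b C w1 w2)"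
    if "\<alpha>2 / \<alpha>1 < 1/4 \<and> s < -1/2"
    using that by (simp add: bilinear_estimate_fails_below_minus_half)
  show "\<not> (\<exists>C. \<forall>w1 w2. schwartz_TR w1 \<and> schwartz_TR w2 \<and> zero_mode w1 \<and> zero_mode w2 \<longrightarrow> bilin_est \<alpha>1 \<alpha>2 s b C w1 w2)"
    if "\<alpha>2 / \<alpha>1 = 1 \<and> s < -1/2"
    using that equal_dispersion bilinear_estimate_fails_below_minus_half_equal_dispersion by auto
  show "\<not> (\<exists>C. \<forall>w1 w2. schwartz_TR w1 \<and> schwartz_TR w2 \<and> zero_mode w2 \<longrightarrow> bilin_est \<alpha>1 \<alpha>2 s b C w1 w2)"
    if "\<alpha>2 / \<alpha>1 = 1"
    using that equal_dispersion bilinear_estimate_fails_equal_dispersion by auto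
  show "\<not> (\<exists>C. \<forall>w1 w2. schwartz_TR w1 \<and> schwartz_TR w2 \<and> zero_mode w2 \<longrightarrow> bilin_est \<alpha>1 \<alpha>2 s b C w1 w2)"
    if "1/4 \<le> \<alpha>2 / \<alpha>1 \<and> \<alpha>2 / \<alpha>1 \<noteq> 1 \<and> s < s_r (\<alpha>2 / \<alpha>1)"
    using that assms(1) by (simp add: bilinear_estimate_fails_below_s_r)
  show "\<not> (\<exists>C. \<forall>w1 w2. schwartz_TR w1 \<and> schwartz_TR w2 \<longrightarrow> bilin_est \<alpha>1 \<alpha>2 s b C w1 w2)"
    by (rule bilinear_estimate_fails_without_mean_zero)
qed

end
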